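(* Consider the recursive network formation model with the utility function described in the context. Suppose $$\gamma<\frac{b_2-b_3}{3b_2-b_3},$$ $$b_1-b_2+\gamma(3b_2-b_3)<c<b_1-b_3, \quad\text{and}\quad (1-\gamma)(b_2-b_3)<c_0\le(1-\gamma)b_2.$$ Then the resulting topology is a bipartite Turán graph: starting from a single node, for every $n\ge1$, the pairwise stable network reached after the $n$-th node has entered is the complete bipartite graph on $n$ nodes with parts of sizes $\lfloor n/2\rfloor$ and $\lceil n/2\rceil$, irrespective of the random order in which nodes are selected to move.
   Context: Networks are finite simple undirected graphs whose vertices (nodes) are self-interested agents. Parameters: benefits $b_1>b_2>b_3>b_4>\dots>0$, where $b_i$ is the benefit a node obtains from a node at distance $i$; a link cost $c$ per immediate neighbor; an intermediation fraction $\gamma$ with $0\le\gamma<1$; and a network entry factor $c_0$. Notation: $N$ is the set of nodes currently in the network, $d_j$ the degree of $j$, and $l(j,w)$ the graph distance. A node $x$ is essential for a pair $y,z$ (with $x\notin\{y,z\}$) if $x$ lies on every path joining $y$ and $z$. Write $E(y,z)$ for the set of nodes essential for $y,z$ and $e(y,z)=|E(y,z)|$. Only pairs joined by a path contribute to the sums below. Utility of node $j$ in network $g$: $$u_j(g)=-c_0\,d_{T(j)}\mathbf 1_{\{j=\mathrm{NE}\}}+d_j(b_1-c)+\sum_{w\in N,\ l(j,w)>1}b_{l(j,w)}-\sum_{w\in N,\ E(j,w)\ne\emptyset}\gamma\, b_{l(j,w)}+\sum_{y,z\in N,\ j\in E(y,z)}\frac{\gamma}{e(y,z)}\,2\,b_{l(y,z)}.$$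 Here $\mathbf 1_{\{j=\mathrm{NE}\}}=1$ exactly when $j$ is a newly entering node evaluating the creation of its first link. $T(j)$ is the existing node to which $j$ forms that first link, and $d_{T(j)}$ is that node's degree before the link. The network before entry gives the entering node utility $0$. Pairwise stability: $g$ is pairwise stable if (a) for every link $(i,j)\in g$, $u_i(g\setminus\{(i,j)\})\le u_i(g)$ and $u_j(g\setminus\{(i,j)\})\le u_j(g)$; and (b) for every non-link $(i,j)\notin g$, if $u_i(g\cup\{(i,j)\})>u_i(g)$ then $u_j(g\cup\{(i,j)\})<u_j(g)$. Recursive model of network formation: - The process starts with a single node. - When the current network of $n-1$ nodes is pairwise stable, a new node considers entering. Its options are to stay out or to propose a link to one existing node. The link forms iff the receiving node's utility does not decrease. No existing node can link to the newcomer before it has formed this first link. - After entry, nodes are repeatedly chosen at random to move. A chosen node plays a myopic best response among three options: create a link with a non-neighbor (the link forms only if the other node's utility does not decrease, which the proposer anticipates); delete a link with a neighbor (unilaterally); or keep the status quo. It alters a link only if this strictly increases its current utility. - This continues until the network is pairwise stable; then the next node considers entering, and so on. "The resulting topology is X" means: for every number $n$ of nodes, every pairwise stable network reached after the $n$-th node has entered is a network of topology X on $n$ nodes, irrespective of the random choices. *)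

theory Defs
  imports Complex_Main
begin

text \<open>Networks: nodes are natural numbers; the network with n nodes has node set {0..<n};
  links are unordered pairs, represented as two-element sets {i,j}.\<close>

type_synonym network = "nat set set"

definition nbr :: "network \<Rightarrow> nat \<Rightarrow> nat \<Rightarrow> bool" where
  "nbr g j k \<longleftrightarrow> j \<noteq> k \<and> {j, k} \<in> g"

definition degree :: "network \<Rightarrow> nat \<Rightarrow> nat" where
  "degree g j = card {k. nbr g j k}"

definition gpath :: "network \<Rightarrow> nat list \<Rightarrow> nat \<Rightarrow> nat \<Rightarrow> bool" where
  "gpath g xs y z \<longleftrightarrow> xs \<noteq> [] \<and> hd xs = y \<and> last xs = z \<and> distinct xs \<and>
     (\<forall>i. Suc i < length xs \<longrightarrow> nbr g (xs ! i) (xs ! Suc i))"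

definition joined :: "network \<Rightarrow> nat \<Rightarrow> nat \<Rightarrow> bool" where
  "joined g y z \<longleftrightarrow> (\<exists>xs. gpath g xs y z)"

text \<open>Graph distance l(y,z) (number of links of a shortest path); meaningful when joined.\<close>
definition gdist :: "network \<Rightarrow> nat \<Rightarrow> nat \<Rightarrow> nat" where
  "gdist g y z = (LEAST k. \<exists>xs. gpath g xs y z \<and> length xs = Suc k)"

definition ess :: "nat set \<Rightarrow> network \<Rightarrow> nat \<Rightarrow> nat \<Rightarrow> nat set" where
  "ess N g y z = {x \<in> N. x \<noteq> y \<and> x \<noteq> z \<and> (\<forall>xs. gpath g xs y z \<longrightarrow> x \<in> set xs)}"

text \<open>Utility of node j (without the entry cost term). Parameters: benefits b (b i is the benefit
  from a node at distance i), link cost c, intermediation fraction gam. The intermediation sum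
  runs over unordered pairs {y,z} (encoded as y < z).\<close>
definition util :: "(nat \<Rightarrow> real) \<Rightarrow> real \<Rightarrow> real \<Rightarrow> nat set \<Rightarrow> network \<Rightarrow> nat \<Rightarrow> real" where
  "util b c gam N g j =
     real (degree g j) * (b 1 - c)
     + (\<Sum>w \<in> {w \<in> N. joined g j w \<and> gdist g j w > 1}. b (gdist g j w))
     - (\<Sum>w \<in> {w \<in> N. joined g j w \<and> ess N g j w \<noteq> {}}. gam * b (gdist g j w))
     + (\<Sum>(y, z) \<in> {(y, z). y \<in> N \<and> z \<in> N \<and> y < z \<and> joined g y z \<and> j \<in> ess N g y z}.
          gam / real (card (ess N g y z)) * 2 * b (gdist g y z))"

definition pairwise_stable ::
  "(nat \<Rightarrow> real) \<Rightarrow> real \<Rightarrow> real \<Rightarrow> nat set \<Rightarrow> network \<Rightarrow> bool" where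
  "pairwise_stable b c gam N g \<longleftrightarrow>
     (\<forall>i \<in> N. \<forall>j \<in> N. nbr g i j \<longrightarrow>
        util b c gam N (g - {{i, j}}) i \<le> util b c gam N g i \<and>
        util b c gam N (g - {{i, j}}) j \<le> util b c gam N g j) \<and>
     (\<forall>i \<in> N. \<forall>j \<in> N. i \<noteq> j \<and> {i, j} \<notin> g \<longrightarrow>
        util b c gam N (insert {i, j} g) i > util b c gam N g i \<longrightarrow>
        util b c gam N (insert {i, j} g) j < util b c gam N g j)"

definition options ::
  "(nat \<Rightarrow> real) \<Rightarrow> real \<Rightarrow> real \<Rightarrow> nat set \<Rightarrow> network \<Rightarrow> nat \<Rightarrow> network set" where
  "options b c gam N g i =
     {insert {i, k} g | k. k \<in> N \<and> k \<noteq> i \<and> {i, k} \<notin> g \<and>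
          util b c gam N (insert {i, k} g) k \<ge> util b c gam N g k}
     \<union> {g - {{i, k}} | k. nbr g i k}"

definition move ::
  "(nat \<Rightarrow> real) \<Rightarrow> real \<Rightarrow> real \<Rightarrow> nat set \<Rightarrow> network \<Rightarrow> network \<Rightarrow> bool" where
  "move b c gam N g g' \<longleftrightarrow>
     (\<exists>i \<in> N. g' \<in> options b c gam N g i \<and>
        util b c gam N g' i > util b c gam N g i \<and>
        (\<forall>h \<in> options b c gam N g i. util b c gam N h i \<le> util b c gam N g' i))"

text \<open>Entry of node n into the network g on {0..<n}: it links to an existing node t.
  Its utility is -c0 * (degree of t before the link) + its utility in the new network;
  staying out gives 0. The newcomer anticipates acceptance (t's utility must not decrease),
  picks a best target, and enters only if this strictly beats staying out.\<close>
definition entry_util ::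
  "(nat \<Rightarrow> real) \<Rightarrow> real \<Rightarrow> real \<Rightarrow> real \<Rightarrow> nat \<Rightarrow> network \<Rightarrow> nat \<Rightarrow> real" where
  "entry_util b c gam c0 n g t =
     - c0 * real (degree g t) + util b c gam {0..<Suc n} (insert {n, t} g) n"

definition accepts ::
  "(nat \<Rightarrow> real) \<Rightarrow> real \<Rightarrow> real \<Rightarrow> nat \<Rightarrow> network \<Rightarrow> nat \<Rightarrow> bool" where
  "accepts b c gam n g t \<longleftrightarrow>
     util b c gam {0..<Suc n} (insert {n, t} g) t \<ge> util b c gam {0..<Suc n} g t"

definition entry_choice ::
  "(nat \<Rightarrow> real) \<Rightarrow> real \<Rightarrow> real \<Rightarrow> real \<Rightarrow> nat \<Rightarrow> network \<Rightarrow> nat \<Rightarrow> bool" where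
  "entry_choice b c gam c0 n g t \<longleftrightarrow>
     t < n \<and> accepts b c gam n g t \<and> entry_util b c gam c0 n g t > 0 \<and>
     (\<forall>t' < n. accepts b c gam n g t' \<longrightarrow>
        entry_util b c gam c0 n g t' \<le> entry_util b c gam c0 n g t)"

inductive reached ::
  "(nat \<Rightarrow> real) \<Rightarrow> real \<Rightarrow> real \<Rightarrow> real \<Rightarrow> nat \<Rightarrow> network \<Rightarrow> bool"
  for b c gam c0 where
  start: "reached b c gam c0 1 {}"
| enter: "reached b c gam c0 n g \<Longrightarrow> entry_choice b c gam c0 n g t \<Longrightarrow>
     (move b c gam {0..<Suc n})\<^sup>*\<^sup>* (insert {n, t} g) g' \<Longrightarrow>
     pairwise_stable b c gam {0..<Suc n} g' \<Longrightarrow>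
     reached b c gam c0 (Suc n) g'"

definition bipartite_turan :: "nat \<Rightarrow> network \<Rightarrow> bool" where
  "bipartite_turan n g \<longleftrightarrow>
     (\<exists>A \<subseteq> {0..<n}. card A = n div 2 \<and> g = {{x, y} | x y. x \<in> A \<and> y \<in> {0..<n} - A})"

end

theory Submission
  imports Defs
begin

text \<open>After the n-th entry the network is a complete bipartite network K(Y, Z) together with the
  newcomer x, linked to a set S of anchors in Y. Deleting a link never pays: in a bipartite network
  it pushes its endpoints from distance 1 to distance at least 3, and c < b 1 - b 3. A new link
  inside a side, or between x and Z, only brings two nodes from distance 2 to distance 1 and earns
  the closing node at most gam * b 2 of intermediation rent (2 * gam * (b 2 - b 3) if it is the only
  anchor), so the lower bound on c makes one endpoint refuse it; sides of size one are settled on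
  the three- and four-node networks that arise. A link between x and a non-anchor of Y, in
  contrast, shortens their distance from 3 to 1 and benefits both. Hence the improving moves just
  add anchors, and pairwise stability forces S = Y, that is K(Y, Z \<union> {x}). Anchoring in the
  smaller part costs the newcomer c0 more and gains only (1 - gam) * (b 2 - b 3) < c0, so for odd n
  it anchors in the larger part, and the parts stay balanced.\<close>

section \<open>Paths, distances and essential nodes\<close>

lemma nbr_sym: "nbr g a b \<longleftrightarrow> nbr g b a"
  unfolding nbr_def by (auto simp: insert_commute)

lemma gpath_Nil [simp]: "\<not> gpath g [] y z"
  unfolding gpath_def by simp

lemma gpath_single [simp]: "gpath g [a] y z \<longleftrightarrow> a = y \<and> a = z"
  unfolding gpath_def by auto

lemma gpath_Cons2: "gpath g (a # b # xs) y z \<longleftrightarrow>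
   a = y \<and> nbr g a b \<and> a \<notin> set (b # xs) \<and> gpath g (b # xs) b z"
proof -
  have "(\<forall>i. Suc i < length (a # b # xs) \<longrightarrow> nbr g ((a # b # xs) ! i) ((a # b # xs) ! Suc i))
     \<longleftrightarrow> nbr g a b \<and> (\<forall>i. Suc i < length (b # xs) \<longrightarrow> nbr g ((b # xs) ! i) ((b # xs) ! Suc i))"
    by (auto simp: nth_Cons split: nat.split)
  then show ?thesis unfolding gpath_def by auto
qed

lemma gpath_mono: "gpath g xs y z \<Longrightarrow> (\<And>a b. nbr g a b \<Longrightarrow> nbr g' a b) \<Longrightarrow> gpath g' xs y z"
  unfolding gpath_def by blast

lemma gpath_subset: "gpath g xs y z \<Longrightarrow> g \<subseteq> g' \<Longrightarrow> gpath g' xs y z"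
  by (erule gpath_mono) (auto simp: nbr_def)

lemma gpath_rev:
  assumes p: "gpath g xs y z"
  shows "gpath g (rev xs) z y"
proof -
  have "nbr g (rev xs ! i) (rev xs ! Suc i)" if i: "Suc i < length xs" for i
  proof -
    have "nbr g (xs ! (length xs - Suc (Suc i))) (xs ! Suc (length xs - Suc (Suc i)))"
      using p i unfolding gpath_def by simp
    then show ?thesis using i by (simp add: rev_nth nbr_sym Suc_diff_Suc)
  qed
  then show ?thesis using p unfolding gpath_def by (auto simp: hd_rev last_rev)
qed

lemma gpath_through_separator:
  assumes "y \<in> C" "z \<notin> C" "v \<notin> C" "\<forall>a\<in>C. \<forall>b'. nbr g a b' \<longrightarrow> b' \<in> C \<or> b' = v"
    and "gpath g xs y z"
  shows "v \<in> set xs"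
  using assms(1,5)
proof (induction xs arbitrary: y)
  case Nil then show ?case by simp
next
  case (Cons a xs)
  show ?case
  proof (cases xs)
    case Nil then show ?thesis using Cons assms(2) by auto
  next
    case (Cons b' rest)
    have "a = y" "nbr g a b'" "gpath g (b' # rest) b' z"
      using \<open>gpath g (a # xs) y z\<close> unfolding Cons by (auto simp: gpath_Cons2)
    then have "b' \<in> C \<or> b' = v" using assms(4) \<open>y \<in> C\<close> by blast
    then show ?thesis
    proof
      assume "b' \<in> C" then show ?thesis using Cons.IH \<open>gpath g (b' # rest) b' z\<close> Cons by auto
    qed (auto simp: Cons)
  qed
qed

lemma gpath_length_ge2: "gpath g xs y z \<Longrightarrow> y \<noteq> z \<Longrightarrow> 2 \<le> length xs"
  by (cases xs rule: remdups_adj.cases) auto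

lemma gpath_length_ge3: "gpath g xs y z \<Longrightarrow> y \<noteq> z \<Longrightarrow> \<not> nbr g y z \<Longrightarrow> 3 \<le> length xs"
  by (cases xs rule: remdups_adj.cases; cases "tl (tl xs)") (auto simp: gpath_Cons2)

lemma gpath_length_ge4:
  "gpath g xs y z \<Longrightarrow> y \<noteq> z \<Longrightarrow> \<not> nbr g y z \<Longrightarrow> \<not> (\<exists>m. nbr g y m \<and> nbr g m z) \<Longrightarrow> 4 \<le> length xs"
  by (cases xs rule: remdups_adj.cases; cases "tl (tl xs)"; cases "tl (tl (tl xs))") (auto simp: gpath_Cons2)

lemma gdist_eqI:
  assumes "gpath g xs y z" "length xs = Suc d" "\<forall>ys. gpath g ys y z \<longrightarrow> Suc d \<le> length ys"
  shows "gdist g y z = d"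
  unfolding gdist_def
proof (rule Least_equality)
  show "\<exists>xs. gpath g xs y z \<and> length xs = Suc d" using assms by blast
next
  fix k assume "\<exists>xs. gpath g xs y z \<and> length xs = Suc k"
  then show "d \<le> k" using assms(3) by force
qed

lemma shortest_gpath:
  assumes "joined g y z"
  shows "\<exists>xs. gpath g xs y z \<and> length xs = Suc (gdist g y z)"
proof -
  obtain xs where "gpath g xs y z" using assms unfolding joined_def by blast
  then have "\<exists>k xs. gpath g xs y z \<and> length xs = Suc k"
    by (intro exI[of _ "length xs - 1"] exI[of _ xs]) (cases xs, auto)
  then show ?thesis unfolding gdist_def by (rule LeastI_ex)
qed

lemma gdist_le:
  assumes "gpath g xs y z" "length xs = Suc k"
  shows "gdist g y z \<le> k"
  unfolding gdist_def by (rule Least_le) (use assms in blast)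

lemma gdist_geI:
  assumes "joined g y z" "\<forall>xs. gpath g xs y z \<longrightarrow> Suc d \<le> length xs"
  shows "d \<le> gdist g y z"
  using shortest_gpath[OF assms(1)] assms(2) by force

lemma gdist_self: "gdist g y y = 0"
  using gdist_le[of g "[y]" y y 0] by simp

lemma joined_self: "joined g y y"
  unfolding joined_def by (rule exI[of _ "[y]"]) simp

lemma gdist_ge1: "joined g y z \<Longrightarrow> y \<noteq> z \<Longrightarrow> 1 \<le> gdist g y z"
proof -
  assume a: "joined g y z" "y \<noteq> z"
  have "\<forall>xs. gpath g xs y z \<longrightarrow> Suc 1 \<le> length xs"
    using gpath_length_ge2[of g _ y z] a(2) by (simp add: eval_nat_numeral)
  then show ?thesis using gdist_geI[OF a(1)] by blast
qed

lemma gdist_ge2: "joined g y z \<Longrightarrow> y \<noteq> z \<Longrightarrow> \<not> nbr g y z \<Longrightarrow> 2 \<le> gdist g y z"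
proof -
  assume a: "joined g y z" "y \<noteq> z" "\<not> nbr g y z"
  have "\<forall>xs. gpath g xs y z \<longrightarrow> Suc 2 \<le> length xs"
    using gpath_length_ge3[of g _ y z] a(2,3) by (simp add: eval_nat_numeral)
  then show ?thesis using gdist_geI[OF a(1)] by blast
qed

lemma gdist_ge3: "joined g y z \<Longrightarrow> y \<noteq> z \<Longrightarrow> \<not> nbr g y z \<Longrightarrow>
   \<not> (\<exists>m. nbr g y m \<and> nbr g m z) \<Longrightarrow> 3 \<le> gdist g y z"
proof -
  assume a: "joined g y z" "y \<noteq> z" "\<not> nbr g y z" "\<not> (\<exists>m. nbr g y m \<and> nbr g m z)"
  have "\<forall>xs. gpath g xs y z \<longrightarrow> Suc 3 \<le> length xs"
    using gpath_length_ge4[of g _ y z] a(2,3,4) by (simp add: eval_nat_numeral)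
  then show ?thesis using gdist_geI[OF a(1)] by blast
qed

lemma gpath2: "nbr g y z \<Longrightarrow> gpath g [y, z] y z"
  by (auto simp: gpath_Cons2 nbr_def)

lemma gpath3: "nbr g y m \<Longrightarrow> nbr g m z \<Longrightarrow> y \<noteq> z \<Longrightarrow> gpath g [y, m, z] y z"
  by (auto simp: gpath_Cons2 nbr_def)

lemma gpath4: "nbr g y m1 \<Longrightarrow> nbr g m1 m2 \<Longrightarrow> nbr g m2 z \<Longrightarrow> y \<noteq> z \<Longrightarrow> y \<noteq> m2 \<Longrightarrow> m1 \<noteq> z
   \<Longrightarrow> gpath g [y, m1, m2, z] y z"
  by (auto simp: gpath_Cons2 nbr_def)

lemma joinedI: "gpath g xs y z \<Longrightarrow> joined g y z"
  unfolding joined_def by blast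

lemma gdist_eq1: "nbr g y z \<Longrightarrow> gdist g y z = 1"
proof -
  assume h: "nbr g y z"
  then have "y \<noteq> z" by (simp add: nbr_def)
  have "\<forall>ys. gpath g ys y z \<longrightarrow> Suc 1 \<le> length ys"
    using gpath_length_ge2[of g _ y z] \<open>y \<noteq> z\<close> by (simp add: eval_nat_numeral)
  then show ?thesis using gdist_eqI[OF gpath2[OF h], of 1] by simp
qed

lemma gdist_eq2: "y \<noteq> z \<Longrightarrow> \<not> nbr g y z \<Longrightarrow> nbr g y m \<Longrightarrow> nbr g m z \<Longrightarrow> gdist g y z = 2"
proof -
  assume a: "y \<noteq> z" "\<not> nbr g y z" "nbr g y m" "nbr g m z"
  have "\<forall>ys. gpath g ys y z \<longrightarrow> Suc 2 \<le> length ys"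
    using gpath_length_ge3[of g _ y z] a by (simp add: eval_nat_numeral)
  then show ?thesis using gdist_eqI[OF gpath3[OF a(3,4,1)], of 2] by (simp add: eval_nat_numeral)
qed

lemma gdist_eq3: "y \<noteq> z \<Longrightarrow> \<not> nbr g y z \<Longrightarrow> \<not> (\<exists>m. nbr g y m \<and> nbr g m z) \<Longrightarrow>
   nbr g y m1 \<Longrightarrow> nbr g m1 m2 \<Longrightarrow> nbr g m2 z \<Longrightarrow> gdist g y z = 3"
proof -
  assume a: "y \<noteq> z" "\<not> nbr g y z" "\<not> (\<exists>m. nbr g y m \<and> nbr g m z)"
    "nbr g y m1" "nbr g m1 m2" "nbr g m2 z"
  have "y \<noteq> m2" using a(2,6) by blast
  have "m1 \<noteq> z" using a(2,4) by blast
  have "\<forall>ys. gpath g ys y z \<longrightarrow> Suc 3 \<le> length ys"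
    using gpath_length_ge4[of g _ y z] a by (simp add: eval_nat_numeral)
  then show ?thesis using gdist_eqI[OF gpath4[OF a(4,5,6,1) \<open>y \<noteq> m2\<close> \<open>m1 \<noteq> z\<close>], of 3]
    by (simp add: eval_nat_numeral)
qed

lemma gdist_mono: "g \<subseteq> g' \<Longrightarrow> joined g y z \<Longrightarrow> gdist g' y z \<le> gdist g y z"
proof -
  assume a: "g \<subseteq> g'" "joined g y z"
  obtain xs where "gpath g xs y z" "length xs = Suc (gdist g y z)" using shortest_gpath[OF a(2)] by blast
  then show ?thesis using gdist_le[of g' xs y z] gpath_subset[OF _ a(1)] by blast
qed

lemma joined_mono: "g \<subseteq> g' \<Longrightarrow> joined g y z \<Longrightarrow> joined g' y z"
  unfolding joined_def using gpath_subset by blast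

lemma notin_ess_if_avoided: "gpath g xs y z \<Longrightarrow> v \<notin> set xs \<Longrightarrow> v \<notin> ess N g y z"
  unfolding ess_def by blast

lemma ess_if_separates: "v \<in> N \<Longrightarrow> v \<noteq> y \<Longrightarrow> v \<noteq> z \<Longrightarrow> y \<in> C \<Longrightarrow> z \<notin> C \<Longrightarrow> v \<notin> C \<Longrightarrow>
   \<forall>a\<in>C. \<forall>b'. nbr g a b' \<longrightarrow> b' \<in> C \<or> b' = v \<Longrightarrow> v \<in> ess N g y z"
  unfolding ess_def using gpath_through_separator[of y C z v g] by blast

lemma ess_antimono: "g \<subseteq> g' \<Longrightarrow> ess N g' y z \<subseteq> ess N g y z"
  unfolding ess_def using gpath_subset by blast

lemma ess_nbr: "nbr g y z \<Longrightarrow> ess N g y z = {}"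
  unfolding ess_def using gpath2[of g y z] by auto

lemma ess_self: "ess N g y y = {}"
  unfolding ess_def by (auto intro: exI[of _ "[y]"])

lemma ess_sym1: "v \<in> ess N g y z \<Longrightarrow> v \<in> ess N g z y"
proof -
  assume a: "v \<in> ess N g y z"
  have "v \<in> set xs" if "gpath g xs z y" for xs
    using a gpath_rev[OF that] unfolding ess_def by auto
  then show ?thesis using a unfolding ess_def by auto
qed

lemma ess_sym: "ess N g y z = ess N g z y"
  using ess_sym1 by blast

lemma gdist_sym_le: "joined g y z \<Longrightarrow> gdist g z y \<le> gdist g y z"
proof -
  assume a: "joined g y z"
  obtain xs where "gpath g xs y z" "length xs = Suc (gdist g y z)" using shortest_gpath[OF a] by blast
  then have "gpath g (rev xs) z y" "length (rev xs) = Suc (gdist g y z)" using gpath_rev[of g xs y z] by simp_all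
  then show ?thesis by (rule gdist_le)
qed

lemma joined_sym1: "joined g y z \<Longrightarrow> joined g z y"
  unfolding joined_def by (blast intro: gpath_rev)

lemma joined_sym: "joined g y z \<longleftrightarrow> joined g z y"
  using joined_sym1 by blast

lemma gdist_sym: "gdist g y z = gdist g z y"
proof (cases "joined g y z")
  case True
  then have "joined g z y" using joined_sym by blast
  then show ?thesis using gdist_sym_le[of g y z] gdist_sym_le[of g z y] True by linarith
next
  case False
  then have "\<not> joined g z y" using joined_sym by blast
  have e1: "\<And>k. \<not> (\<exists>xs. gpath g xs y z \<and> length xs = Suc k)" using False unfolding joined_def by blast
  have e2: "\<And>k. \<not> (\<exists>xs. gpath g xs z y \<and> length xs = Suc k)" using \<open>\<not> joined g z y\<close> unfolding joined_def by blast
  have "(\<lambda>k. \<exists>xs. gpath g xs y z \<and> length xs = Suc k) = (\<lambda>k. \<exists>xs. gpath g xs z y \<and> length xs = Suc k)"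
    by (intro ext) (use e1 e2 in blast)
  then show ?thesis unfolding gdist_def by simp
qed

lemma ess_sub: "ess N g y z \<subseteq> N"
  unfolding ess_def by auto

lemma ess_finite: "finite N \<Longrightarrow> finite (ess N g y z)"
  by (rule finite_subset[OF ess_sub])

lemma nbr_insert: "nbr (insert {p, k} g) a b \<longleftrightarrow> nbr g a b \<or> (a = p \<and> b = k \<and> p \<noteq> k) \<or> (a = k \<and> b = p \<and> p \<noteq> k)"
  unfolding nbr_def by (auto simp: doubleton_eq_iff)

lemma notin_of_nbr: "a \<noteq> bb \<Longrightarrow> \<not> nbr g a bb \<Longrightarrow> {a, bb} \<notin> g"
  unfolding nbr_def by simp

lemma nbr_mono: "g \<subseteq> g' \<Longrightarrow> nbr g a bb \<Longrightarrow> nbr g' a bb"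
  unfolding nbr_def by auto

lemma gdist_supergraph_nbr: "g \<subseteq> g' \<Longrightarrow> nbr g p u \<Longrightarrow> gdist g' p u = gdist g p u"
  using gdist_eq1 nbr_mono by metis

lemma gdist_supergraph_2path: "g \<subseteq> g' \<Longrightarrow> p \<noteq> u \<Longrightarrow> \<not> nbr g' p u \<Longrightarrow> nbr g p m \<Longrightarrow> nbr g m u
   \<Longrightarrow> gdist g' p u = gdist g p u"
proof -
  assume a: "g \<subseteq> g'" "p \<noteq> u" "\<not> nbr g' p u" "nbr g p m" "nbr g m u"
  have "\<not> nbr g p u" using a(1,3) nbr_mono by blast
  then have "gdist g p u = 2" using gdist_eq2[OF a(2) _ a(4,5)] by simp
  moreover have "gdist g' p u = 2" using gdist_eq2[OF a(2,3) nbr_mono[OF a(1,4)] nbr_mono[OF a(1,5)]] .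
  ultimately show ?thesis by simp
qed

lemma ess_endpoint: "v = y \<or> v = z \<Longrightarrow> v \<notin> ess N g y z"
  unfolding ess_def by auto

section \<open>Decomposition of the utility\<close>

text \<open>The benefit j keeps from w: the paper's b_{l(j,w)}, less the fraction gam paid to
  intermediaries when some node is essential for the pair.\<close>
definition reach_value :: "(nat \<Rightarrow> real) \<Rightarrow> real \<Rightarrow> nat set \<Rightarrow> network \<Rightarrow> nat \<Rightarrow> nat \<Rightarrow> real" where
  "reach_value b gam N g j w =
     (if joined g j w then b (gdist g j w) * (if ess N g j w = {} then 1 else 1 - gam) else 0)"

definition broker_share :: "(nat \<Rightarrow> real) \<Rightarrow> real \<Rightarrow> nat set \<Rightarrow> network \<Rightarrow> nat \<Rightarrow> nat \<times> nat \<Rightarrow> real" where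
  "broker_share b gam N g j q = (if joined g (fst q) (snd q) \<and> j \<in> ess N g (fst q) (snd q)
      then gam / real (card (ess N g (fst q) (snd q))) * 2 * b (gdist g (fst q) (snd q)) else 0)"

definition node_pairs :: "nat set \<Rightarrow> (nat \<times> nat) set" where
  "node_pairs N = {q. fst q \<in> N \<and> snd q \<in> N \<and> fst q < snd q}"

definition links_within :: "nat set \<Rightarrow> network \<Rightarrow> bool" where
  "links_within N g \<longleftrightarrow> (\<forall>a b. nbr g a b \<longrightarrow> a \<in> N \<and> b \<in> N)"

lemma finite_node_pairs: "finite N \<Longrightarrow> finite (node_pairs N)"
  by (rule finite_subset[of _ "N \<times> N"]) (auto simp: node_pairs_def)

lemma joined_if_nbr: "nbr g y z \<Longrightarrow> joined g y z"
  using joinedI gpath2 by metis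

lemma degree_within:
  assumes "links_within N g" "j \<in> N"
  shows "degree g j = card {w \<in> N - {j}. nbr g j w}"
proof -
  have "{k. nbr g j k} = {w \<in> N - {j}. nbr g j w}"
    using assms unfolding links_within_def nbr_def by auto
  then show ?thesis unfolding degree_def by simp
qed

lemma reach_value_split:
  "reach_value b gam N g j w = (if nbr g j w then b 1 else 0)
     + (if joined g j w \<and> \<not> nbr g j w then b (gdist g j w) else 0)
     - (if joined g j w \<and> ess N g j w \<noteq> {} then gam * b (gdist g j w) else 0)"
proof (cases "nbr g j w")
  case True
  then show ?thesis
    using gdist_eq1[OF True] ess_nbr[OF True] joined_if_nbr[OF True] unfolding reach_value_def by simp
next
  case False
  then show ?thesis unfolding reach_value_def by (simp add: algebra_simps)
qed

lemma sum_broker_share: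
  assumes fin: "finite N"
  shows "(\<Sum>q\<in>node_pairs N. broker_share b gam N g j q) =
    (\<Sum>(y, z) \<in> {(y, z). y \<in> N \<and> z \<in> N \<and> y < z \<and> joined g y z \<and> j \<in> ess N g y z}.
       gam / real (card (ess N g y z)) * 2 * b (gdist g y z))"
proof -
  have eq: "{(y, z). y \<in> N \<and> z \<in> N \<and> y < z \<and> joined g y z \<and> j \<in> ess N g y z}
     = {q \<in> node_pairs N. joined g (fst q) (snd q) \<and> j \<in> ess N g (fst q) (snd q)}"
    unfolding node_pairs_def by auto
  show ?thesis
    unfolding broker_share_def sum.inter_filter[OF finite_node_pairs[OF fin], symmetric] eq
    by (intro sum.cong) auto
qed

lemma broker_share_swap: "broker_share b gam N g j (a, bb) = broker_share b gam N g j (bb, a)"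
  unfolding broker_share_def using ess_sym[of N g a bb] gdist_sym[of g a bb] joined_sym[of g a bb] by simp

lemma util_decomposition:
  assumes fin: "finite N" and jN: "j \<in> N" and E: "links_within N g"
  shows "util b c gam N g j = (\<Sum>w\<in>N-{j}. reach_value b gam N g j w) - c * real (degree g j)
           + (\<Sum>q\<in>node_pairs N. broker_share b gam N g j q)"
proof -
  let ?M = "N - {j}"
  have finM: "finite ?M" using fin by simp
  have far: "{w \<in> N. joined g j w \<and> gdist g j w > 1} = {w \<in> ?M. joined g j w \<and> \<not> nbr g j w}"
  proof (intro set_eqI iffI)
    fix w assume w: "w \<in> {w \<in> N. joined g j w \<and> gdist g j w > 1}"
    then have "w \<noteq> j" using gdist_self by (metis less_not_refl2 mem_Collect_eq not_one_less_zero)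
    moreover have "\<not> nbr g j w" using w gdist_eq1 by fastforce
    ultimately show "w \<in> {w \<in> ?M. joined g j w \<and> \<not> nbr g j w}" using w by auto
  next
    fix w assume "w \<in> {w \<in> ?M. joined g j w \<and> \<not> nbr g j w}"
    then show "w \<in> {w \<in> N. joined g j w \<and> gdist g j w > 1}" using gdist_ge2[of g j w] by auto
  qed
  have intermediated: "{w \<in> N. joined g j w \<and> ess N g j w \<noteq> {}} = {w \<in> ?M. joined g j w \<and> ess N g j w \<noteq> {}}"
    using ess_self by auto
  show ?thesis
    unfolding util_def sum_broker_share[OF fin] reach_value_split[of b gam N g j]
      sum.inter_filter[OF finM, symmetric] far intermediated sum_subtractf sum.distrib
    by (simp add: algebra_simps degree_within[OF E jN])
qed

lemma links_within_insert: "links_within N g \<Longrightarrow> p \<in> N \<Longrightarrow> k \<in> N \<Longrightarrow> links_within N (insert {p, k} g)"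
  unfolding links_within_def nbr_insert by blast

lemma gpath_delete_avoided:
  assumes gp: "gpath g xs y z" and j: "j \<notin> set xs"
  shows "gpath (g - {{j, k}}) xs y z"
proof -
  have "nbr (g - {{j, k}}) (xs ! i) (xs ! Suc i)" if "Suc i < length xs" for i
  proof -
    have n: "nbr g (xs ! i) (xs ! Suc i)" using gp that unfolding gpath_def by blast
    have "xs ! i \<in> set xs" "xs ! Suc i \<in> set xs" using that by simp_all
    then have "xs ! i \<noteq> j" "xs ! Suc i \<noteq> j" using j by auto
    then have "{xs ! i, xs ! Suc i} \<noteq> {j, k}" by (metis doubleton_eq_iff)
    then show ?thesis using n unfolding nbr_def by auto
  qed
  then show ?thesis using gp unfolding gpath_def by blast
qed

lemma ess_delete_own_link:
  assumes "j \<in> ess N (g - {{j, k}}) y z"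
  shows "j \<in> ess N g y z"
proof -
  have "j \<in> set xs" if "gpath g xs y z" for xs
    using gpath_delete_avoided[OF that, of j k] assms unfolding ess_def by blast
  then show ?thesis using assms unfolding ess_def by blast
qed

lemma broker_share_unessential:
  "g \<subseteq> g' \<Longrightarrow> p \<notin> ess N g (fst q) (snd q) \<Longrightarrow> broker_share b gam N g' p q = 0"
  unfolding broker_share_def using ess_antimono[of g g' N "fst q" "snd q"] by auto

lemma degree_insert:
  assumes fin: "finite N" and E: "links_within N g" and pk: "p \<noteq> k" and ng: "{p, k} \<notin> g"
  shows "degree (insert {p, k} g) p = Suc (degree g p)"
proof -
  have "{m. nbr (insert {p, k} g) p m} = insert k {m. nbr g p m}"
    unfolding nbr_insert using pk by auto
  moreover have "k \<notin> {m. nbr g p m}" using ng unfolding nbr_def by simp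
  moreover have "finite {m. nbr g p m}"
  proof -
    have "{m. nbr g p m} \<subseteq> N" using E unfolding links_within_def by blast
    then show ?thesis using fin finite_subset by blast
  qed
  ultimately show ?thesis unfolding degree_def by simp
qed

lemma sum_le_single_term:
  fixes f :: "nat \<Rightarrow> real"
  assumes "finite A" "\<forall>w\<in>A. w \<noteq> ww \<longrightarrow> f w \<le> 0" "\<forall>w\<in>A. w = ww \<longrightarrow> f w \<le> B" "0 \<le> B"
  shows "(\<Sum>w\<in>A. f w) \<le> B"
proof (cases "ww \<in> A")
  case True
  have "(\<Sum>w\<in>A. f w) = f ww + (\<Sum>w\<in>A-{ww}. f w)" using sum.remove[OF assms(1) True] by simp
  moreover have "(\<Sum>w\<in>A-{ww}. f w) \<le> 0" using assms(2) by (intro sum_nonpos) auto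
  ultimately show ?thesis using assms(3) True by simp
next
  case False
  then have "(\<Sum>w\<in>A. f w) \<le> 0" using assms(2) by (intro sum_nonpos) auto
  then show ?thesis using assms(4) by simp
qed

lemma sum_eq_single_term:
  fixes f :: "'a \<Rightarrow> real"
  assumes "finite A" "q0 \<in> A" "\<forall>q\<in>A. q \<noteq> q0 \<longrightarrow> f q = 0"
  shows "sum f A = f q0"
proof -
  have "sum f A = f q0 + sum f (A - {q0})" using sum.remove[OF assms(1,2)] by simp
  moreover have "sum f (A - {q0}) = 0" using assms(3) by (intro sum.neutral) auto
  ultimately show ?thesis by simp
qed

definition bipartite_by :: "(nat \<Rightarrow> bool) \<Rightarrow> network \<Rightarrow> bool" where
  "bipartite_by s g \<longleftrightarrow> (\<forall>a b. nbr g a b \<longrightarrow> s a \<noteq> s b)"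

section \<open>Changing a single link\<close>

locale benefit_params =
  fixes b :: "nat \<Rightarrow> real" and gam :: real
  assumes b_pos: "\<forall>i \<ge> 1. 0 < b i"
    and b_dec: "\<forall>i \<ge> 1. b (Suc i) < b i"
    and gam_nonneg: "0 \<le> gam" and gam_lt1: "gam < 1"
begin

lemma b_antimono:
  assumes "1 \<le> m" "m \<le> n"
  shows "b n \<le> b m"
  using assms(2)
proof (induction rule: dec_induct)
  case (step k)
  then show ?case using b_dec[rule_format, of k] assms(1) by simp
qed simp

lemma b_positive: "1 \<le> i \<Longrightarrow> 0 < b i"
  using b_pos by simp

lemma reach_value_nonneg: "w \<noteq> j \<Longrightarrow> 0 \<le> reach_value b gam N g j w"
proof (cases "joined g j w")
  case True
  assume "w \<noteq> j"
  then have "1 \<le> gdist g j w" using gdist_ge1[OF True] by simp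
  then have "0 < b (gdist g j w)" by (rule b_positive)
  moreover have "0 \<le> (if ess N g j w = {} then 1 else (1::real) - gam)" using gam_lt1 by simp
  ultimately show ?thesis unfolding reach_value_def using True by simp
next
  case False
  then show ?thesis unfolding reach_value_def by simp
qed

lemma reach_value_le: "w \<noteq> j \<Longrightarrow> joined g j w \<Longrightarrow> reach_value b gam N g j w \<le> b (gdist g j w)"
proof -
  assume a: "w \<noteq> j" "joined g j w"
  have "0 < b (gdist g j w)" using gdist_ge1[of g j w] a b_positive by auto
  then show ?thesis unfolding reach_value_def using a gam_nonneg by auto
qed

lemma reach_value_nbr: "nbr g j w \<Longrightarrow> reach_value b gam N g j w = b 1"
  unfolding reach_value_def using joined_if_nbr gdist_eq1 ess_nbr by simp

lemma broker_share_nonneg: "0 \<le> broker_share b gam N g j q"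
proof -
  { assume c: "joined g (fst q) (snd q)" "j \<in> ess N g (fst q) (snd q)"
    then have "fst q \<noteq> snd q" using ess_self by fastforce
    then have "0 < b (gdist g (fst q) (snd q))" using gdist_ge1 c b_positive by auto
    then have "0 \<le> gam / real (card (ess N g (fst q) (snd q))) * 2 * b (gdist g (fst q) (snd q))"
      using gam_nonneg by auto }
  then show ?thesis unfolding broker_share_def by auto
qed

lemma reach_value_mono:
  assumes "g' \<subseteq> g" "w \<noteq> j"
  shows "reach_value b gam N g' j w \<le> reach_value b gam N g j w"
proof (cases "joined g' j w")
  case True
  have jg: "joined g j w" using joined_mono[OF assms(1) True] .
  have d: "gdist g j w \<le> gdist g' j w" using gdist_mono[OF assms(1) True] .
  have d1: "1 \<le> gdist g j w" using gdist_ge1[OF jg] assms(2) by auto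
  have bb: "b (gdist g' j w) \<le> b (gdist g j w)" using b_antimono[OF d1 d] .
  have e: "ess N g j w \<subseteq> ess N g' j w" using ess_antimono[OF assms(1)] .
  have f: "(if ess N g' j w = {} then 1 else 1 - gam) \<le> (if ess N g j w = {} then 1 else (1::real) - gam)"
    using e gam_nonneg by auto
  have "0 < b (gdist g j w)" using d1 by (rule b_positive)
  moreover have "0 \<le> (if ess N g' j w = {} then 1 else (1::real) - gam)" using gam_lt1 by simp
  ultimately have "b (gdist g' j w) * (if ess N g' j w = {} then 1 else 1 - gam)
     \<le> b (gdist g j w) * (if ess N g j w = {} then 1 else 1 - gam)"
    by (intro mult_mono[OF bb f]) simp_all
  then show ?thesis unfolding reach_value_def using True jg by simp
next
  case False
  then have "reach_value b gam N g' j w = 0" unfolding reach_value_def by simp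
  then show ?thesis using reach_value_nonneg[OF assms(2)] by simp
qed

lemma broker_share_delete:
  assumes fin: "finite N"
  shows "broker_share b gam N (g - {{j, k}}) j q \<le> broker_share b gam N g j q"
proof (cases "joined (g - {{j, k}}) (fst q) (snd q) \<and> j \<in> ess N (g - {{j, k}}) (fst q) (snd q)")
  case True
  let ?g' = "g - {{j, k}}" and ?y = "fst q" and ?z = "snd q"
  have sub: "?g' \<subseteq> g" by auto
  have jg: "joined g ?y ?z" using joined_mono[OF sub] True by blast
  have je: "j \<in> ess N g ?y ?z" using ess_delete_own_link True by blast
  have yz: "?y \<noteq> ?z" using je ess_self by fastforce
  have d: "gdist g ?y ?z \<le> gdist ?g' ?y ?z" using gdist_mono[OF sub] True by blast
  have d1: "1 \<le> gdist g ?y ?z" using gdist_ge1[OF jg yz] .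
  have bb: "b (gdist ?g' ?y ?z) \<le> b (gdist g ?y ?z)" using b_antimono[OF d1 d] .
  have bp: "0 < b (gdist ?g' ?y ?z)" using b_positive d1 d by auto
  have e: "card (ess N g ?y ?z) \<le> card (ess N ?g' ?y ?z)"
    using ess_antimono[OF sub] ess_finite[OF fin] by (simp add: card_mono)
  have e1: "0 < card (ess N g ?y ?z)" using je ess_finite[OF fin] card_gt_0_iff by blast
  have "gam / real (card (ess N ?g' ?y ?z)) \<le> gam / real (card (ess N g ?y ?z))"
    using e e1 gam_nonneg by (simp add: divide_left_mono)
  moreover have "0 \<le> gam / real (card (ess N ?g' ?y ?z))" using gam_nonneg by simp
  moreover have "0 \<le> gam / real (card (ess N g ?y ?z)) * 2" using gam_nonneg by simp
  ultimately have "gam / real (card (ess N ?g' ?y ?z)) * 2 * b (gdist ?g' ?y ?z)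
     \<le> gam / real (card (ess N g ?y ?z)) * 2 * b (gdist g ?y ?z)"
    using bb bp by (intro mult_mono) (auto simp del: times_divide_eq_left)
  then show ?thesis unfolding broker_share_def using True jg je by simp
next
  case False
  have "broker_share b gam N (g - {{j, k}}) j q = 0" unfolding broker_share_def by (rule if_not_P[OF False])
  then show ?thesis using broker_share_nonneg[of N g j q] by simp
qed

lemma util_delete_le:
  assumes fin: "finite N" and iN: "i \<in> N" and E: "links_within N g" and ik: "nbr g i k"
  shows "util b c gam N (g - {{i, k}}) i \<le> util b c gam N g i - (b 1 - c) + reach_value b gam N (g - {{i, k}}) i k"
proof -
  let ?g' = "g - {{i, k}}"
  have sub: "?g' \<subseteq> g" by auto
  have E': "links_within N ?g'" using E unfolding links_within_def nbr_def by auto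
  have kN: "k \<in> N" using E ik unfolding links_within_def by blast
  have ki: "k \<noteq> i" using ik nbr_def by auto
  have "{m. nbr ?g' i m} = {m. nbr g i m} - {k}"
    unfolding nbr_def by (auto simp: doubleton_eq_iff)
  moreover have "finite {m. nbr g i m}"
    using E fin unfolding links_within_def by (metis (no_types, lifting) finite_subset mem_Collect_eq subsetI)
  ultimately have deg: "degree ?g' i = degree g i - 1" "1 \<le> degree g i"
    unfolding degree_def using ik by (auto simp: card_Diff_singleton card_gt_0_iff Suc_le_eq)
  then have degr: "real (degree ?g' i) = real (degree g i) - 1" by simp
  have fM: "finite (N - {i})" using fin by simp
  have kM: "k \<in> N - {i}" using kN ki by simp
  have v1: "(\<Sum>w\<in>N-{i}. reach_value b gam N ?g' i w) = reach_value b gam N ?g' i k + (\<Sum>w\<in>N-{i}-{k}. reach_value b gam N ?g' i w)"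
    using sum.remove[OF fM kM] by simp
  have v2: "(\<Sum>w\<in>N-{i}. reach_value b gam N g i w) = b 1 + (\<Sum>w\<in>N-{i}-{k}. reach_value b gam N g i w)"
    using sum.remove[OF fM kM, of "reach_value b gam N g i"] reach_value_nbr[OF ik, of N] by simp
  have v3: "(\<Sum>w\<in>N-{i}-{k}. reach_value b gam N ?g' i w) \<le> (\<Sum>w\<in>N-{i}-{k}. reach_value b gam N g i w)"
    by (rule sum_mono) (use reach_value_mono[OF sub] in auto)
  have it: "(\<Sum>q\<in>node_pairs N. broker_share b gam N ?g' i q) \<le> (\<Sum>q\<in>node_pairs N. broker_share b gam N g i q)"
    by (rule sum_mono) (rule broker_share_delete[OF fin])
  show ?thesis
    unfolding util_decomposition[OF fin iN E] util_decomposition[OF fin iN E'] degr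
    using v1 v2 v3 it by (simp add: algebra_simps)
qed

lemma util_insert_ge:
  assumes fin: "finite N" and iN: "i \<in> N" and kN: "k \<in> N" and ik: "i \<noteq> k"
    and ng: "{i, k} \<notin> g" and E: "links_within N g"
  shows "util b c gam N g i \<le> util b c gam N (insert {i, k} g) i - (b 1 - c) + reach_value b gam N g i k"
proof -
  have E': "links_within N (insert {i, k} g)" using E iN kN unfolding links_within_def nbr_def
    by (auto simp: doubleton_eq_iff)
  have nb: "nbr (insert {i, k} g) i k" using ik unfolding nbr_def by simp
  have eq: "insert {i, k} g - {{i, k}} = g" using ng by auto
  show ?thesis using util_delete_le[OF fin iN E' nb] unfolding eq .
qed

lemma util_delete_bipartite_lt:
  assumes fin: "finite N" and iN: "i \<in> N" and E: "links_within N g" and ik: "nbr g i k"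
    and B: "bipartite_by s g" and cb: "c < b 1 - b 3"
  shows "util b c gam N (g - {{i, k}}) i < util b c gam N g i"
proof -
  let ?g' = "g - {{i, k}}"
  have ki: "k \<noteq> i" using ik nbr_def by auto
  have "reach_value b gam N ?g' i k \<le> b 3"
  proof (cases "joined ?g' i k")
    case True
    have nn: "\<not> nbr ?g' i k" unfolding nbr_def by auto
    have nc: "\<not> (\<exists>m. nbr ?g' i m \<and> nbr ?g' m k)"
    proof
      assume "\<exists>m. nbr ?g' i m \<and> nbr ?g' m k"
      then obtain m where "nbr g i m" "nbr g m k" unfolding nbr_def by auto
      then show False using B ik unfolding bipartite_by_def by metis
    qed
    have "3 \<le> gdist ?g' i k" using gdist_ge3[OF True ki[symmetric] nn nc] .
    then have "b (gdist ?g' i k) \<le> b 3" using b_antimono by simp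
    then show ?thesis using reach_value_le[OF ki True, of N] by simp
  next
    case False
    then show ?thesis unfolding reach_value_def using b_positive[of 3] by simp
  qed
  then show ?thesis using util_delete_le[OF fin iN E ik, where c=c] cb by simp
qed

lemma util_insert_diff:
  assumes fin: "finite N" and E: "links_within N g" and pN: "p \<in> N" and kN: "k \<in> N" and pk: "p \<noteq> k"
    and ng: "{p, k} \<notin> g"
  shows "util b c gam N (insert {p, k} g) p - util b c gam N g p =
    (\<Sum>w\<in>N-{p}. reach_value b gam N (insert {p, k} g) p w - reach_value b gam N g p w) - c
    + (\<Sum>q\<in>node_pairs N. broker_share b gam N (insert {p, k} g) p q - broker_share b gam N g p q)"
proof -
  have E': "links_within N (insert {p, k} g)" by (rule links_within_insert[OF E pN kN])
  show ?thesis
    unfolding util_decomposition[OF fin pN E] util_decomposition[OF fin pN E'] degree_insert[OF fin E pk ng]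
    by (simp add: sum_subtractf algebra_simps)
qed

lemma reach_value_gain_same_dist:
  assumes sub: "g \<subseteq> g'" and wp: "w \<noteq> p" and jw: "joined g p w" and dw: "gdist g' p w = gdist g p w"
  shows "reach_value b gam N g' p w - reach_value b gam N g p w
    \<le> (if ess N g p w = {} then 0 else gam * b (gdist g p w))"
proof (cases "ess N g p w = {}")
  case True
  then have "ess N g' p w = {}" using ess_antimono[OF sub, of N p w] by blast
  then show ?thesis unfolding reach_value_def using jw joined_mono[OF sub jw] dw True by simp
next
  case False
  have "reach_value b gam N g' p w \<le> b (gdist g p w)"
    using reach_value_le[OF wp joined_mono[OF sub jw], of N] dw by simp
  moreover have "reach_value b gam N g p w = b (gdist g p w) * (1 - gam)"
    unfolding reach_value_def using jw False by simp
  ultimately show ?thesis using False by (simp add: algebra_simps)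
qed

lemma reach_value_gain_close_2path:
  assumes fin: "finite N" and kN: "k \<in> N" and pk: "p \<noteq> k"
    and ng: "{p, k} \<notin> g"
    and cn: "nbr g p m" "nbr g m k"
    and dp: "\<forall>w\<in>N-{p,k}. joined g p w \<and> gdist (insert {p, k} g) p w = gdist g p w"
    and es: "\<forall>w\<in>N-{p}. ess N g p w \<noteq> {} \<longrightarrow> w = ww \<and> 2 \<le> gdist g p ww"
  shows "(\<Sum>w\<in>N-{p}. reach_value b gam N (insert {p, k} g) p w - reach_value b gam N g p w)
     \<le> b 1 - b 2 + gam * b 2"
proof -
  let ?g = "insert {p, k} g"
  let ?gain = "\<lambda>w. reach_value b gam N ?g p w - reach_value b gam N g p w"
  have kM: "k \<in> N - {p}" using kN pk by simp
  have "\<not> nbr g p k" using ng unfolding nbr_def by simp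
  then have "gdist g p k = 2" by (rule gdist_eq2[OF pk _ cn])
  then have "reach_value b gam N g p k = b 2 * (if ess N g p k = {} then 1 else 1 - gam)"
    unfolding reach_value_def using joinedI[OF gpath3[OF cn pk]] by simp
  moreover have "reach_value b gam N ?g p k = b 1" by (rule reach_value_nbr) (use pk in \<open>simp add: nbr_insert\<close>)
  ultimately have gain_k: "?gain k \<le> b 1 - b 2 + (if ess N g p k = {} then 0 else gam * b 2)"
    using gam_nonneg by (auto simp: algebra_simps)
  have gain_w: "?gain w \<le> (if ess N g p w = {} then 0 else gam * b (gdist g p w))"
    if "w \<in> N - {p} - {k}" for w
  proof -
    have "joined g p w" "gdist ?g p w = gdist g p w" "w \<noteq> p" using dp that by auto
    then show ?thesis by (rule reach_value_gain_same_dist[OF subset_insertI, rotated])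
  qed
  define B where "B = (if ww = k then 0 else gam * b 2)"
  have rest: "(\<Sum>w\<in>N-{p}-{k}. ?gain w) \<le> B"
  proof (rule sum_le_single_term[where ww = ww])
    show "0 \<le> B" unfolding B_def using gam_nonneg b_positive[of 2] by simp
    show "\<forall>w\<in>N - {p} - {k}. w \<noteq> ww \<longrightarrow> ?gain w \<le> 0"
    proof (intro ballI impI)
      fix w assume w: "w \<in> N - {p} - {k}" "w \<noteq> ww"
      then have "ess N g p w = {}" using es by blast
      then show "?gain w \<le> 0" using gain_w[OF w(1)] by simp
    qed
    show "\<forall>w\<in>N - {p} - {k}. w = ww \<longrightarrow> ?gain w \<le> B"
    proof (intro ballI impI)
      fix w assume w: "w \<in> N - {p} - {k}" "w = ww"
      have "b (gdist g p w) \<le> b 2" if "ess N g p w \<noteq> {}"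
      proof -
        have "2 \<le> gdist g p w" using es w that by blast
        then show ?thesis using b_antimono[of 2 "gdist g p w"] by simp
      qed
      then have "(if ess N g p w = {} then 0 else gam * b (gdist g p w)) \<le> gam * b 2"
        using gam_nonneg b_positive[of 2] by (simp add: mult_left_mono)
      then show "?gain w \<le> B" using gain_w[OF w(1)] unfolding B_def using w by simp
    qed
  qed (use fin in simp)
  have "(\<Sum>w\<in>N-{p}. ?gain w) = ?gain k + (\<Sum>w\<in>N-{p}-{k}. ?gain w)"
    using sum.remove[OF _ kM] fin by simp
  moreover have "(if ess N g p k = {} then 0 else gam * b 2) + B \<le> gam * b 2"
    using es kM gam_nonneg b_positive[of 2] unfolding B_def by auto
  ultimately show ?thesis using gain_k rest by linarith
qed

lemma util_close_2path_gain_le: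
  assumes fin: "finite N" and E: "links_within N g" and pN: "p \<in> N" and kN: "k \<in> N" and pk: "p \<noteq> k"
    and ng: "{p, k} \<notin> g"
    and cn: "nbr g p m" "nbr g m k"
    and nc: "\<forall>y\<in>N. \<forall>z\<in>N. p \<notin> ess N g y z"
    and dp: "\<forall>w\<in>N-{p,k}. joined g p w \<and> gdist (insert {p, k} g) p w = gdist g p w"
    and es: "\<forall>w\<in>N-{p}. ess N g p w \<noteq> {} \<longrightarrow> w = ww \<and> 2 \<le> gdist g p ww"
  shows "util b c gam N (insert {p, k} g) p - util b c gam N g p \<le> b 1 - c - b 2 + gam * b 2"
proof -
  have "broker_share b gam N (insert {p, k} g) p q \<le> broker_share b gam N g p q" if "q \<in> node_pairs N" for q
  proof -
    have np: "p \<notin> ess N g (fst q) (snd q)" using nc that by (auto simp: node_pairs_def)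
    show ?thesis using broker_share_unessential[OF subset_insertI np] broker_share_nonneg[of N g p q] by auto
  qed
  then have "(\<Sum>q\<in>node_pairs N. broker_share b gam N (insert {p, k} g) p q - broker_share b gam N g p q) \<le> 0"
    by (intro sum_nonpos) simp
  then show ?thesis
    unfolding util_insert_diff[OF fin E pN kN pk ng]
    using reach_value_gain_close_2path[OF fin kN pk ng cn dp es] by linarith
qed

lemma link_gains_negative:
  assumes cl: "b 1 - b 2 + gam * (3 * b 2 - b 3) < c"
  shows "b 1 - c - b 2 + gam * b 2 < 0" "b 1 - b 2 - c + 2 * gam * (b 2 - b 3) < 0"
    "b 1 - c - b 2 + gam * (3 * b 2 - b 3) < 0"
proof -
  have b2: "0 < b 2" and b3: "0 < b 3" using b_positive by auto
  have "b (Suc 2) < b 2" using b_dec[rule_format, of 2] by simp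
  then have b23: "b 3 < b 2" by simp
  have "gam * b 2 \<le> gam * (3 * b 2 - b 3)" using gam_nonneg b23 b3 by (intro mult_left_mono) auto
  then show "b 1 - c - b 2 + gam * b 2 < 0" using cl by linarith
  have "2 * gam * (b 2 - b 3) \<le> gam * (3 * b 2 - b 3)"
  proof -
    have "gam * (3 * b 2 - b 3) - 2 * gam * (b 2 - b 3) = gam * (b 2 + b 3)" by (simp add: algebra_simps)
    moreover have "0 \<le> gam * (b 2 + b 3)" using gam_nonneg b2 b3 by simp
    ultimately show ?thesis by linarith
  qed
  then show "b 1 - b 2 - c + 2 * gam * (b 2 - b 3) < 0" using cl by linarith
  show "b 1 - c - b 2 + gam * (3 * b 2 - b 3) < 0" using cl by linarith
qed

lemma util_insert_far_gt:
  assumes fin: "finite N" and E: "links_within N g" and iN: "i \<in> N" and kN: "k \<in> N" and ik: "i \<noteq> k"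
    and ng: "{i, k} \<notin> g" and nc: "\<not> (\<exists>m. nbr g i m \<and> nbr g m k)" and ch: "c < b 1 - b 3"
  shows "util b c gam N g i < util b c gam N (insert {i, k} g) i"
proof -
  have nn: "\<not> nbr g i k" using ng unfolding nbr_def by simp
  have "reach_value b gam N g i k \<le> b 3"
  proof (cases "joined g i k")
    case True
    have "3 \<le> gdist g i k" by (rule gdist_ge3[OF True ik nn nc])
    then have "b (gdist g i k) \<le> b 3" using b_antimono by simp
    then show ?thesis using reach_value_le[OF ik[symmetric] True, of N] by simp
  next
    case False
    then show ?thesis unfolding reach_value_def using b_positive[of 3] by simp
  qed
  then show ?thesis using util_insert_ge[OF fin iN kN ik ng E, where c = c] ch by simp
qed

end

section \<open>The bipartite network with an entrant\<close>

text \<open>The networks visited after an entry: the previous network K(Y, Z) plus the newcomer x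
  linked to a set S \<subseteq> Y of anchors.\<close>
definition entrant_net :: "nat set \<Rightarrow> nat set \<Rightarrow> nat \<Rightarrow> nat set \<Rightarrow> network" where
  "entrant_net Y Z x S = {{a, bb} | a bb. a \<in> Y \<and> bb \<in> Z} \<union> {{x, s} | s. s \<in> S}"

lemma exists_other_elem: "finite Z \<Longrightarrow> 2 \<le> card Z \<Longrightarrow> \<exists>z\<in>Z. z \<noteq> v"
proof (rule ccontr)
  assume "finite Z" "2 \<le> card Z" "\<not> (\<exists>z\<in>Z. z \<noteq> v)"
  then have "Z \<subseteq> {v}" by auto
  then have "card Z \<le> 1" using card_mono[of "{v}" Z] by simp
  then show False using \<open>2 \<le> card Z\<close> by simp
qed

locale entrant_setting = benefit_params +
  fixes Y Z :: "nat set" and x :: nat and N :: "nat set"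
  assumes YZ_disj: "Y \<inter> Z = {}" and x_notin_Y: "x \<notin> Y" and x_notin_Z: "x \<notin> Z" and N_def: "N = insert x (Y \<union> Z)"
    and finite_N: "finite N" and entrant_greatest: "\<forall>a\<in>Y \<union> Z. a < x"
begin

lemma finite_Y: "finite Y" and finite_Z: "finite Z"
  using finite_N N_def by auto

lemma nbr_entrant_net:
  assumes "S \<subseteq> Y"
  shows "nbr (entrant_net Y Z x S) a bb \<longleftrightarrow> (a \<in> Y \<and> bb \<in> Z) \<or> (a \<in> Z \<and> bb \<in> Y) \<or> (a = x \<and> bb \<in> S) \<or> (a \<in> S \<and> bb = x)"
proof
  assume "nbr (entrant_net Y Z x S) a bb"
  then have ab: "a \<noteq> bb" "{a, bb} \<in> entrant_net Y Z x S" unfolding nbr_def by auto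
  then show "(a \<in> Y \<and> bb \<in> Z) \<or> (a \<in> Z \<and> bb \<in> Y) \<or> (a = x \<and> bb \<in> S) \<or> (a \<in> S \<and> bb = x)"
    unfolding entrant_net_def by (auto simp: doubleton_eq_iff)
next
  assume h: "(a \<in> Y \<and> bb \<in> Z) \<or> (a \<in> Z \<and> bb \<in> Y) \<or> (a = x \<and> bb \<in> S) \<or> (a \<in> S \<and> bb = x)"
  then have "a \<noteq> bb" using YZ_disj x_notin_Y assms by auto
  moreover have "{a, bb} \<in> entrant_net Y Z x S" using h unfolding entrant_net_def by (auto simp: insert_commute)
  ultimately show "nbr (entrant_net Y Z x S) a bb" unfolding nbr_def by simp
qed

lemma links_within_entrant_net: "S \<subseteq> Y \<Longrightarrow> links_within N (entrant_net Y Z x S)"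
  unfolding links_within_def using nbr_entrant_net N_def by auto

lemma bipartite_by_entrant_net: "S \<subseteq> Y \<Longrightarrow> bipartite_by (\<lambda>a. a \<in> Y) (entrant_net Y Z x S)"
  unfolding bipartite_by_def using nbr_entrant_net YZ_disj x_notin_Y by auto

lemma entrant_net_insert: "entrant_net Y Z x (insert u S) = insert {x, u} (entrant_net Y Z x S)"
  unfolding entrant_net_def by auto

lemma le_entrant: "a \<in> N \<Longrightarrow> a \<le> x"
proof -
  assume "a \<in> N"
  then have "a = x \<or> a \<in> Y \<union> Z" using N_def by simp
  then show ?thesis using entrant_greatest less_imp_le by blast
qed

lemma node_pairsE:
  assumes "q \<in> node_pairs N"
  obtains a bb where "q = (a, bb)" "a \<in> N" "bb \<in> N" "a < bb" "a \<noteq> x"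
proof -
  obtain a bb where q: "q = (a, bb)" by (cases q)
  then have "a \<in> N" "bb \<in> N" "a < bb" using assms unfolding node_pairs_def by auto
  moreover have "a \<noteq> x" using le_entrant[of bb] calculation by simp
  ultimately show ?thesis using that q by blast
qed

lemma path_avoiding_within_YZ:
  assumes SY: "S \<subseteq> Y" and Y: "\<exists>y\<in>Y. y \<noteq> v" and Z: "\<exists>z\<in>Z. z \<noteq> v" and a: "a \<in> Y \<union> Z" and bb: "bb \<in> Y \<union> Z" and ab: "a \<noteq> bb" and v: "v \<noteq> a" "v \<noteq> bb"
  shows "\<exists>xs. gpath (entrant_net Y Z x S) xs a bb \<and> v \<notin> set xs"
proof -
  let ?g = "entrant_net Y Z x S"
  note nb = nbr_entrant_net[OF SY]
  consider "a \<in> Y" "bb \<in> Z" | "a \<in> Z" "bb \<in> Y" | "a \<in> Y" "bb \<in> Y" | "a \<in> Z" "bb \<in> Z" using a bb by blast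
  then show ?thesis
  proof cases
    case 1
    then have "gpath ?g [a, bb] a bb" using gpath2 nb by simp
    then show ?thesis using v by (intro exI[of _ "[a, bb]"]) simp
  next
    case 2
    then have "gpath ?g [a, bb] a bb" using gpath2 nb by simp
    then show ?thesis using v by (intro exI[of _ "[a, bb]"]) simp
  next
    case 3
    obtain z where z: "z \<in> Z" "z \<noteq> v" using Z by blast
    have "gpath ?g [a, z, bb] a bb" using gpath3[of ?g a z bb] nb 3 z ab by simp
    then show ?thesis using v z by (intro exI[of _ "[a, z, bb]"]) simp
  next
    case 4
    obtain y where y: "y \<in> Y" "y \<noteq> v" using Y by blast
    have "gpath ?g [a, y, bb] a bb" using gpath3[of ?g a y bb] nb 4 y ab by simp
    then show ?thesis using v y by (intro exI[of _ "[a, y, bb]"]) simp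
  qed
qed

lemma ess_anchor:
  assumes E: "links_within N g" and only: "\<forall>cc. nbr g cc x \<longrightarrow> cc = t" and a: "a \<in> Y \<union> Z" and at: "a \<noteq> t"
    and t: "t \<in> Y"
  shows "t \<in> ess N g a x"
proof (rule ess_if_separates[where C = "(Y \<union> Z) - {t}"])
  show "t \<in> N" using t N_def by simp
  show "t \<noteq> a" using at by simp
  show "t \<noteq> x" using t x_notin_Y by blast
  show "a \<in> Y \<union> Z - {t}" using a at by simp
  show "x \<notin> Y \<union> Z - {t}" using x_notin_Y x_notin_Z by simp
  show "t \<notin> Y \<union> Z - {t}" by simp
  show "\<forall>aa\<in>Y \<union> Z - {t}. \<forall>b'. nbr g aa b' \<longrightarrow> b' \<in> Y \<union> Z - {t} \<or> b' = t"
  proof (intro ballI allI impI)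
    fix aa b' assume h: "aa \<in> Y \<union> Z - {t}" "nbr g aa b'"
    have "b' \<in> N" using E h(2) unfolding links_within_def by blast
    moreover have "b' \<noteq> x" using only h nbr_sym by blast
    ultimately show "b' \<in> Y \<union> Z - {t} \<or> b' = t" using N_def by auto
  qed
qed

end

locale entrant_setting_large = entrant_setting +
  assumes card_Y_ge2: "2 \<le> card Y" and card_Z_ge2: "2 \<le> card Z"
begin

lemma other_in_Z: "\<exists>z\<in>Z. z \<noteq> v" using exists_other_elem[OF finite_Z card_Z_ge2] .

lemma other_in_Y: "\<exists>y\<in>Y. y \<noteq> v" using exists_other_elem[OF finite_Y card_Y_ge2] .

lemma path_avoiding_from_entrant:
  assumes SY: "S \<subseteq> Y" and Sv: "S \<noteq> {}" "S \<noteq> {v}" and bb: "bb \<in> Y \<union> Z" and v: "v \<noteq> bb" "v \<noteq> x"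
  shows "\<exists>xs. gpath (entrant_net Y Z x S) xs x bb \<and> v \<notin> set xs"
proof -
  let ?g = "entrant_net Y Z x S"
  note nb = nbr_entrant_net[OF SY]
  obtain s where s: "s \<in> S" "s \<noteq> v" using Sv by blast
  have sY: "s \<in> Y" using s SY by blast
  have xb: "x \<noteq> bb" using bb x_notin_Y x_notin_Z by blast
  consider "bb \<in> S" | "bb \<in> Y" "bb \<notin> S" | "bb \<in> Z" using bb by blast
  then show ?thesis
  proof cases
    case 1
    then have "gpath ?g [x, bb] x bb" using gpath2 nb by simp
    then show ?thesis using v by (intro exI[of _ "[x, bb]"]) simp
  next
    case 2
    obtain z where z: "z \<in> Z" "z \<noteq> v" using other_in_Z by blast
    have "s \<noteq> bb" using s 2 by blast
    have "x \<noteq> z" using z x_notin_Z by blast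
    have "gpath ?g [x, s, z, bb] x bb"
      using gpath4[of ?g x s z bb] nb s sY z 2 xb \<open>s \<noteq> bb\<close> \<open>x \<noteq> z\<close> by simp
    then show ?thesis using v z s by (intro exI[of _ "[x, s, z, bb]"]) simp
  next
    case 3
    have "gpath ?g [x, s, bb] x bb" using gpath3[of ?g x s bb] nb s sY 3 xb by simp
    then show ?thesis using v s by (intro exI[of _ "[x, s, bb]"]) simp
  qed
qed

lemma path_avoiding:
  assumes SY: "S \<subseteq> Y" and Sne: "S \<noteq> {}" and a: "a \<in> N" and bb: "bb \<in> N" and ab: "a \<noteq> bb"
    and v: "v \<noteq> a" "v \<noteq> bb" and Sv: "S \<noteq> {v} \<or> (a \<noteq> x \<and> bb \<noteq> x)"
  shows "\<exists>xs. gpath (entrant_net Y Z x S) xs a bb \<and> v \<notin> set xs"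
proof -
  consider "a = x" | "bb = x" | "a \<noteq> x" "bb \<noteq> x" by blast
  then show ?thesis
  proof cases
    case 1
    then have "bb \<in> Y \<union> Z" using bb ab N_def by auto
    then show ?thesis using path_avoiding_from_entrant[OF SY Sne _ _ v(2)] 1 Sv v by auto
  next
    case 2
    then have "a \<in> Y \<union> Z" using a ab N_def by auto
    then obtain xs where "gpath (entrant_net Y Z x S) xs x a" "v \<notin> set xs"
      using path_avoiding_from_entrant[OF SY Sne _ _ v(1)] 2 Sv v by auto
    then show ?thesis using gpath_rev 2 by (intro exI[of _ "rev xs"]) simp
  next
    case 3
    then show ?thesis using path_avoiding_within_YZ[OF SY other_in_Y other_in_Z _ _ ab v] a bb N_def by auto
  qed
qed

lemma joined_entrant_net:
  assumes SY: "S \<subseteq> Y" and Sne: "S \<noteq> {}" and a: "a \<in> N" and bb: "bb \<in> N"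
  shows "joined (entrant_net Y Z x S) a bb"
proof (cases "a = bb")
  case True then show ?thesis using joined_self by simp
next
  case False
  obtain v where v: "v \<notin> N" using finite_N ex_new_if_finite[OF infinite_UNIV_nat] by blast
  have "S \<noteq> {v}" using v SY N_def by auto
  then show ?thesis using path_avoiding[OF SY Sne a bb False, of v] v a bb unfolding joined_def by auto
qed

lemma not_ess_entrant_net:
  assumes SY: "S \<subseteq> Y" and Sne: "S \<noteq> {}" and a: "a \<in> N" and bb: "bb \<in> N"
    and Sv: "S \<noteq> {v} \<or> (a \<noteq> x \<and> bb \<noteq> x)"
  shows "v \<notin> ess N (entrant_net Y Z x S) a bb"
proof (cases "a = bb")
  case True then show ?thesis using ess_self by simp
next
  case False
  show ?thesis
  proof (cases "v = a \<or> v = bb")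
    case True then show ?thesis unfolding ess_def by auto
  next
    case F2: False
    then obtain xs where "gpath (entrant_net Y Z x S) xs a bb" "v \<notin> set xs"
      using path_avoiding[OF SY Sne a bb False] Sv by auto
    then show ?thesis using notin_ess_if_avoided by blast
  qed
qed

lemma ess_entrant_net_empty:
  assumes SY: "S \<subseteq> Y" and Sne: "S \<noteq> {}" and a: "a \<in> N" and bb: "bb \<in> N" and ax: "a \<noteq> x" and bx: "bb \<noteq> x"
  shows "ess N (entrant_net Y Z x S) a bb = {}"
proof -
  have "v \<notin> ess N (entrant_net Y Z x S) a bb" for v
    by (rule not_ess_entrant_net[OF SY Sne a bb]) (simp add: ax bx)
  then show ?thesis by blast
qed

lemma ess_from_entrant_net_nonempty:
  assumes SY: "S \<subseteq> Y" and Sne: "S \<noteq> {}" and pN: "p \<in> N" and px: "p \<noteq> x"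
    and u: "u \<in> N" and e: "ess N (entrant_net Y Z x S) p u \<noteq> {}"
  shows "u = x \<and> p \<notin> S"
proof -
  have "u = x" using ess_entrant_net_empty[OF SY Sne pN u px] e by blast
  moreover have "\<not> nbr (entrant_net Y Z x S) p x" using e ess_nbr \<open>u = x\<close> by blast
  ultimately show ?thesis using x_notin_Y x_notin_Z by (auto simp: nbr_entrant_net[OF SY])
qed

lemma never_ess_entrant_net:
  assumes SY: "S \<subseteq> Y" and Sne: "S \<noteq> {}" and Sp: "S \<noteq> {p}"
  shows "\<forall>y\<in>N. \<forall>z\<in>N. p \<notin> ess N (entrant_net Y Z x S) y z"
proof (intro ballI)
  fix y z assume "y \<in> N" "z \<in> N"
  then show "p \<notin> ess N (entrant_net Y Z x S) y z" by (rule not_ess_entrant_net[OF SY Sne]) (simp add: Sp)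
qed

lemma util_link_gain_Z_side:
  assumes SY: "S \<subseteq> Y" and Sne: "S \<noteq> {}" and w: "w \<in> Z" and k: "k \<in> insert x Z" and wk: "w \<noteq> k"
  shows "util b c gam N (insert {w, k} (entrant_net Y Z x S)) w - util b c gam N (entrant_net Y Z x S) w
     \<le> b 1 - c - b 2 + gam * b 2"
proof -
  let ?g = "entrant_net Y Z x S"
  let ?g' = "insert {w, k} ?g"
  note nb = nbr_entrant_net[OF SY]
  have sub: "?g \<subseteq> ?g'" by auto
  have wN: "w \<in> N" and kN: "k \<in> N" using w k N_def by auto
  have wY: "w \<notin> Y" using w YZ_disj by blast
  have wS: "w \<notin> S" using wY SY by blast
  have wx: "w \<noteq> x" using w x_notin_Z by blast
  have kY: "k \<notin> Y" using k YZ_disj x_notin_Y by blast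
  have kS: "k \<notin> S" using kY SY by blast
  have nwk: "\<not> nbr ?g w k" by (simp add: nb wY kY wS kS wx)
  have ng: "{w, k} \<notin> ?g" by (rule notin_of_nbr[OF wk nwk])
  obtain s where s: "s \<in> S" using Sne by blast
  have sY: "s \<in> Y" using s SY by blast
  have m1: "nbr ?g w s" by (simp add: nb w sY)
  have s_nbr: "nbr ?g s u" if "u \<in> insert x Z" for u using that s sY by (auto simp: nb)
  have Sw: "S \<noteq> {w}" using wS s by blast
  have nc: "\<forall>y\<in>N. \<forall>z\<in>N. w \<notin> ess N ?g y z" by (rule never_ess_entrant_net[OF SY Sne Sw])
  have dp: "\<forall>u\<in>N-{w,k}. joined ?g w u \<and> gdist ?g' w u = gdist ?g w u"
  proof (intro ballI conjI)
    fix u assume u: "u \<in> N - {w, k}"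
    then have uN: "u \<in> N" and uw: "u \<noteq> w" and uk: "u \<noteq> k" by auto
    show "joined ?g w u" by (rule joined_entrant_net[OF SY Sne wN uN])
    consider "u \<in> Y" | "u \<in> insert x Z" using uN N_def by blast
    then show "gdist ?g' w u = gdist ?g w u"
    proof cases
      case 1
      then have "nbr ?g w u" by (simp add: nb w)
      then show ?thesis by (rule gdist_supergraph_nbr[OF sub])
    next
      case 2
      then have "\<not> nbr ?g' w u" using uk uw wS wY wx YZ_disj x_notin_Y unfolding nbr_insert by (auto simp: nb)
      then show ?thesis using gdist_supergraph_2path[OF sub uw[symmetric] _ m1 s_nbr[OF 2]] by blast
    qed
  qed
  have d2: "gdist ?g w x = 2"
  proof (rule gdist_eq2[OF wx _ m1])
    show "\<not> nbr ?g w x" by (simp add: nb wY wS wx x_notin_Y)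
    show "nbr ?g s x" by (rule s_nbr) simp
  qed
  have es: "\<forall>u\<in>N-{w}. ess N ?g w u \<noteq> {} \<longrightarrow> u = x \<and> 2 \<le> gdist ?g w x"
    using ess_from_entrant_net_nonempty[OF SY Sne wN wx] d2 by auto
  show ?thesis
    by (rule util_close_2path_gain_le[OF finite_N links_within_entrant_net[OF SY] wN kN wk ng m1 s_nbr[OF k] nc dp es])
qed

lemma gdist_entrant_outside_S:
  assumes SY: "S \<subseteq> Y" and Sne: "S \<noteq> {}" and p: "p \<in> Y - S" and k: "k \<in> Y - S"
  shows "gdist (entrant_net Y Z x S) p x = 3" "gdist (insert {p, k} (entrant_net Y Z x S)) p x = 3"
proof -
  let ?g = "entrant_net Y Z x S"
  let ?g' = "insert {p, k} ?g"
  note nb = nbr_entrant_net[OF SY]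
  have sub: "?g \<subseteq> ?g'" by auto
  have px: "p \<noteq> x" and kx: "k \<noteq> x" using p k x_notin_Y by auto
  obtain z where z: "z \<in> Z" using other_in_Z by blast
  obtain s where s: "s \<in> S" using Sne by blast
  have path: "nbr ?g p z" "nbr ?g z s" "nbr ?g s x" using p z s SY by (auto simp: nb)
  have xn: "\<not> nbr ?g p x" using p by (simp add: nb x_notin_Y x_notin_Z px)
  have xn': "\<not> nbr ?g' p x" using xn px kx unfolding nbr_insert by simp
  have nc: "\<not> (\<exists>m. nbr ?g p m \<and> nbr ?g m x)"
  proof
    assume "\<exists>m. nbr ?g p m \<and> nbr ?g m x"
    then obtain m where "nbr ?g p m" "nbr ?g m x" by blast
    then show False using p YZ_disj SY x_notin_Y x_notin_Z by (auto simp: nb)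
  qed
  have nc': "\<not> (\<exists>m. nbr ?g' p m \<and> nbr ?g' m x)"
  proof
    assume "\<exists>m. nbr ?g' p m \<and> nbr ?g' m x"
    then obtain m where h: "nbr ?g' p m" "nbr ?g' m x" by blast
    then have "nbr ?g m x" using px kx unfolding nbr_insert by auto
    then have "m \<in> S" by (auto simp add: nb x_notin_Y x_notin_Z dest: subsetD[OF SY])
    moreover have "m \<in> Z \<or> m = k" using h(1) p YZ_disj SY px unfolding nbr_insert by (auto simp: nb)
    ultimately show False using k SY YZ_disj by blast
  qed
  show "gdist ?g p x = 3" by (rule gdist_eq3[OF px xn nc path])
  show "gdist ?g' p x = 3"
    by (rule gdist_eq3[OF px xn' nc' nbr_mono[OF sub path(1)] nbr_mono[OF sub path(2)] nbr_mono[OF sub path(3)]])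
qed

lemma util_link_gain_Y_side:
  assumes SY: "S \<subseteq> Y" and Sne: "S \<noteq> {}" and p: "p \<in> Y" and k: "k \<in> Y" and pk: "p \<noteq> k"
    and Sp: "S \<noteq> {p}" and pkS: "p \<in> S \<or> k \<notin> S"
  shows "util b c gam N (insert {p, k} (entrant_net Y Z x S)) p - util b c gam N (entrant_net Y Z x S) p
     \<le> b 1 - c - b 2 + gam * b 2"
proof -
  let ?g = "entrant_net Y Z x S"
  let ?g' = "insert {p, k} ?g"
  note nb = nbr_entrant_net[OF SY]
  have sub: "?g \<subseteq> ?g'" by auto
  have pN: "p \<in> N" and kN: "k \<in> N" using p k N_def by auto
  have pZ: "p \<notin> Z" and kZ: "k \<notin> Z" using p k YZ_disj by auto
  have px: "p \<noteq> x" and kx: "k \<noteq> x" using p k x_notin_Y by auto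
  have nwk: "\<not> nbr ?g p k" by (simp add: nb x_notin_Y x_notin_Z pZ kZ px kx)
  have ng: "{p, k} \<notin> ?g" by (rule notin_of_nbr[OF pk nwk])
  obtain z where z: "z \<in> Z" using other_in_Z by blast
  have m1: "nbr ?g p z" by (simp add: nb x_notin_Y x_notin_Z p z)
  have m2: "nbr ?g z k" by (simp add: nb x_notin_Y x_notin_Z k z)
  have nc: "\<forall>y\<in>N. \<forall>z\<in>N. p \<notin> ess N ?g y z" by (rule never_ess_entrant_net[OF SY Sne Sp])
  have dp: "\<forall>u\<in>N-{p,k}. joined ?g p u \<and> gdist ?g' p u = gdist ?g p u"
  proof (intro ballI conjI)
    fix u assume u: "u \<in> N - {p, k}"
    then have uN: "u \<in> N" and up: "u \<noteq> p" and uk: "u \<noteq> k" by auto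
    show "joined ?g p u" by (rule joined_entrant_net[OF SY Sne pN uN])
    have uN': "u \<in> insert x (Y \<union> Z)" using uN N_def by simp
    consider "u \<in> Z" | "u = x" | "u \<in> Y" using uN' by blast
    then show "gdist ?g' p u = gdist ?g p u"
    proof cases
      case 1
      then have "nbr ?g p u" by (simp add: nb x_notin_Y x_notin_Z p)
      then show ?thesis by (rule gdist_supergraph_nbr[OF sub])
    next
      case 2
      show ?thesis
      proof (cases "p \<in> S")
        case True
        then have "nbr ?g p u" using 2 by (simp add: nb x_notin_Y x_notin_Z)
        then show ?thesis by (rule gdist_supergraph_nbr[OF sub])
      next
        case False
        then show ?thesis using gdist_entrant_outside_S[OF SY Sne] p k pkS 2 by simp
      qed
    next
      case 3
      have "u \<notin> Z" "u \<noteq> x" using 3 YZ_disj x_notin_Y by auto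
      then have nn: "\<not> nbr ?g' p u" using uk up pZ px unfolding nbr_insert by (simp add: nb x_notin_Y x_notin_Z)
      have "nbr ?g z u" using 3 by (simp add: nb x_notin_Y x_notin_Z z)
      then show ?thesis using gdist_supergraph_2path[OF sub up[symmetric] nn m1] by blast
    qed
  qed
  have es: "\<forall>u\<in>N-{p}. ess N ?g p u \<noteq> {} \<longrightarrow> u = x \<and> 2 \<le> gdist ?g p x"
  proof (intro ballI impI)
    fix u assume "u \<in> N - {p}" "ess N ?g p u \<noteq> {}"
    then have "u = x" "p \<notin> S" using ess_from_entrant_net_nonempty[OF SY Sne pN px] by auto
    then show "u = x \<and> 2 \<le> gdist ?g p x" using gdist_entrant_outside_S(1)[OF SY Sne, of p k] p k pkS by simp
  qed
  show ?thesis
    by (rule util_close_2path_gain_le[OF finite_N links_within_entrant_net[OF SY] pN kN pk ng m1 m2 nc dp es])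
qed

end

text \<open>With a single anchor t, a link from t to u \<in> Y also raises the rent t collects on the pair
  (u, x), whose distance drops from 3 to 2; this case is therefore computed exactly.\<close>
locale anchored_link = entrant_setting_large +
  fixes t u :: nat
  assumes t_in_Y: "t \<in> Y" and u_in_Y: "u \<in> Y" and u_ne_t: "u \<noteq> t"
begin

abbreviation G0 :: network where "G0 \<equiv> entrant_net Y Z x {t}"

abbreviation G1 :: network where "G1 \<equiv> insert {t, u} G0"

lemma G0_subset_G1: "G0 \<subseteq> G1"
  by auto

lemma anchor_facts:
  "{t} \<subseteq> Y" "t \<in> N" "u \<in> N" "x \<in> N" "t \<notin> Z" "u \<notin> Z" "t \<noteq> x" "u \<noteq> x"
  using t_in_Y u_in_Y N_def YZ_disj x_notin_Y by auto

lemma nbr_G0: "nbr G0 a bb \<longleftrightarrow> (a \<in> Y \<and> bb \<in> Z) \<or> (a \<in> Z \<and> bb \<in> Y) \<or> (a = x \<and> bb = t) \<or> (a = t \<and> bb = x)"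
  using nbr_entrant_net[OF anchor_facts(1)] by simp

lemma nbr_G1: "nbr G1 a bb \<longleftrightarrow> nbr G0 a bb \<or> (a = t \<and> bb = u) \<or> (a = u \<and> bb = t)"
  using u_ne_t unfolding nbr_insert by auto

lemma not_nbr_G0_t_u: "\<not> nbr G0 t u"
  using anchor_facts by (simp add: nbr_G0)

lemma nbr_entrant_G0: "nbr G0 a x \<longleftrightarrow> a = t"
  using x_notin_Y x_notin_Z by (auto simp: nbr_G0)

lemma nbr_entrant_G1: "nbr G1 a x \<longleftrightarrow> a = t"
  using nbr_entrant_G0 anchor_facts by (auto simp: nbr_G1)

lemma joined_G0_G1: "a \<in> N \<Longrightarrow> bb \<in> N \<Longrightarrow> joined G0 a bb \<and> joined G1 a bb"
  using joined_entrant_net[OF anchor_facts(1)] joined_mono[OF G0_subset_G1] by blast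

lemma ess_towards_entrant:
  assumes a: "a \<in> Y \<union> Z" "a \<noteq> t"
  shows "ess N G0 a x = {t} \<and> ess N G1 a x = {t}"
proof -
  have E: "links_within N G0" by (rule links_within_entrant_net[OF anchor_facts(1)])
  have E': "links_within N G1" by (rule links_within_insert[OF E anchor_facts(2,3)])
  have t1: "t \<in> ess N G0 a x" by (rule ess_anchor[OF E _ a t_in_Y]) (use nbr_entrant_G0 in blast)
  have t2: "t \<in> ess N G1 a x" by (rule ess_anchor[OF E' _ a t_in_Y]) (use nbr_entrant_G1 in blast)
  have others: "v \<notin> ess N G0 a x" if "v \<noteq> t" for v
    by (rule not_ess_entrant_net[OF anchor_facts(1)]) (use that a N_def in auto)
  show ?thesis using t1 t2 others ess_antimono[OF G0_subset_G1, of N a x] by blast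
qed

lemma gdist_towards_entrant_Z:
  assumes a: "a \<in> Z"
  shows "gdist G0 a x = 2" "gdist G1 a x = 2"
proof -
  have ax: "a \<noteq> x" and at: "nbr G0 a t" using a x_notin_Z t_in_Y by (auto simp: nbr_G0)
  have n: "\<not> nbr G0 a x" "\<not> nbr G1 a x" using a anchor_facts by (auto simp: nbr_entrant_G0 nbr_entrant_G1)
  have tx: "nbr G0 t x" by (simp add: nbr_G0)
  show "gdist G0 a x = 2" by (rule gdist_eq2[OF ax n(1) at tx])
  show "gdist G1 a x = 2" by (rule gdist_eq2[OF ax n(2)]) (use at tx in \<open>auto simp: nbr_G1\<close>)
qed

lemma gdist_towards_entrant_Y:
  assumes a: "a \<in> Y" "a \<noteq> t"
  shows "gdist G0 a x = 3" and "a \<noteq> u \<Longrightarrow> gdist G1 a x = 3"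
proof -
  obtain z where z: "z \<in> Z" using other_in_Z by blast
  have ax: "a \<noteq> x" using a x_notin_Y by blast
  have path: "nbr G0 a z" "nbr G0 z t" "nbr G0 t x" using a z t_in_Y by (auto simp: nbr_G0)
  have no_common: "\<not> nbr G0 a t" using a t_in_Y YZ_disj x_notin_Y by (auto simp: nbr_G0)
  show "gdist G0 a x = 3"
    by (rule gdist_eq3[OF ax _ _ path]) (use a no_common in \<open>auto simp: nbr_entrant_G0\<close>)
  assume "a \<noteq> u"
  then have no_common': "\<not> nbr G1 a t" using no_common a by (auto simp: nbr_G1)
  show "gdist G1 a x = 3"
    by (rule gdist_eq3[OF ax _ _ nbr_mono[OF G0_subset_G1 path(1)] nbr_mono[OF G0_subset_G1 path(2)]
          nbr_mono[OF G0_subset_G1 path(3)]])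
      (use a no_common' in \<open>auto simp: nbr_entrant_G1\<close>)
qed

lemma gdist_G1_u_entrant: "gdist G1 u x = 2"
  by (rule gdist_eq2[where m = t]) (use anchor_facts u_ne_t x_notin_Z in \<open>auto simp: nbr_entrant_G1 nbr_G1 nbr_G0\<close>)

lemma reach_value_gain_anchor:
  "(\<Sum>w\<in>N-{t}. reach_value b gam N G1 t w - reach_value b gam N G0 t w) = b 1 - b 2"
proof -
  have SY: "{t} \<subseteq> Y" by (rule anchor_facts(1))
  obtain z where z: "z \<in> Z" using other_in_Z by blast
  have tz: "nbr G0 t z" using z t_in_Y by (simp add: nbr_G0)
  have unchanged: "reach_value b gam N G1 t w = reach_value b gam N G0 t w" if w: "w \<in> N - {t}" "w \<noteq> u" for w
  proof -
    have wN: "w \<in> N" using w by simp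
    have e0: "ess N G0 t w = {}"
    proof (cases "w = x")
      case True then show ?thesis using ess_nbr[of G0 t x] by (simp add: nbr_G0)
    next
      case False then show ?thesis using ess_entrant_net_empty[OF SY _ anchor_facts(2) wN anchor_facts(7)] by simp
    qed
    have e1: "ess N G1 t w = {}" using e0 ess_antimono[OF G0_subset_G1, of N t w] by blast
    have "gdist G1 t w = gdist G0 t w"
    proof (cases "w \<in> Y - {x}")
      case True
      have "\<not> nbr G1 t w" using True w t_in_Y YZ_disj x_notin_Y by (auto simp: nbr_G1 nbr_G0)
      moreover have "nbr G0 z w" using True z by (simp add: nbr_G0)
      ultimately show ?thesis using gdist_supergraph_2path[OF G0_subset_G1 _ _ tz] w by auto
    next
      case False
      then have "nbr G0 t w" using w t_in_Y N_def by (auto simp: nbr_G0)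
      then show ?thesis by (rule gdist_supergraph_nbr[OF G0_subset_G1])
    qed
    then show ?thesis unfolding reach_value_def using joined_G0_G1[OF anchor_facts(2) wN] e0 e1 by simp
  qed
  have "(\<Sum>w\<in>N-{t}. reach_value b gam N G1 t w - reach_value b gam N G0 t w)
      = reach_value b gam N G1 t u - reach_value b gam N G0 t u"
    by (rule sum_eq_single_term) (use finite_N anchor_facts u_ne_t unchanged in auto)
  moreover have "reach_value b gam N G0 t u = b 2"
  proof -
    have "gdist G0 t u = 2"
      by (rule gdist_eq2[OF u_ne_t[symmetric] not_nbr_G0_t_u tz]) (use z u_in_Y in \<open>simp add: nbr_G0\<close>)
    moreover have "ess N G0 t u = {}" using ess_entrant_net_empty[OF SY] anchor_facts by simp
    ultimately show ?thesis unfolding reach_value_def using joined_G0_G1 anchor_facts by simp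
  qed
  moreover have "reach_value b gam N G1 t u = b 1" by (rule reach_value_nbr) (simp add: nbr_G1)
  ultimately show ?thesis by simp
qed

lemma broker_share_gain_anchor_unchanged:
  assumes q: "q \<in> node_pairs N" "q \<noteq> (u, x)"
  shows "broker_share b gam N G1 t q = broker_share b gam N G0 t q"
proof -
  obtain a bb where ab: "q = (a, bb)" "a \<in> N" "bb \<in> N" "a < bb" "a \<noteq> x" by (rule node_pairsE[OF q(1)])
  consider "bb \<noteq> x" | "bb = x" "a = t" | "bb = x" "a \<noteq> t" by blast
  then show ?thesis
  proof cases
    case 1
    have "ess N G0 a bb = {}" by (rule ess_entrant_net_empty[OF anchor_facts(1) _ ab(2,3,5) 1]) simp
    then show ?thesis using ess_antimono[OF G0_subset_G1, of N a bb] by (simp add: broker_share_def ab(1))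
  next
    case 2
    then show ?thesis by (simp add: broker_share_def ess_def ab(1))
  next
    case 3
    have a: "a \<in> Y \<union> Z" "a \<noteq> t" "a \<noteq> u" using ab 3 q(2) N_def by auto
    have "gdist G1 a x = gdist G0 a x"
      using gdist_towards_entrant_Z gdist_towards_entrant_Y a by (cases "a \<in> Z") auto
    then show ?thesis
      using ess_towards_entrant[OF a(1,2)] joined_G0_G1[OF ab(2)] anchor_facts
      by (simp add: broker_share_def ab(1) 3)
  qed
qed

lemma broker_share_gain_anchor:
  "(\<Sum>q\<in>node_pairs N. broker_share b gam N G1 t q - broker_share b gam N G0 t q) = 2 * gam * (b 2 - b 3)"
proof -
  have "(\<Sum>q\<in>node_pairs N. broker_share b gam N G1 t q - broker_share b gam N G0 t q)
      = broker_share b gam N G1 t (u, x) - broker_share b gam N G0 t (u, x)"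
    by (rule sum_eq_single_term)
      (use finite_node_pairs[OF finite_N] anchor_facts entrant_greatest u_in_Y broker_share_gain_anchor_unchanged
        in \<open>auto simp: node_pairs_def\<close>)
  moreover have "broker_share b gam N G1 t (u, x) = gam * 2 * b 2"
    using ess_towards_entrant[of u] u_in_Y u_ne_t gdist_G1_u_entrant joined_G0_G1 anchor_facts
    by (simp add: broker_share_def)
  moreover have "broker_share b gam N G0 t (u, x) = gam * 2 * b 3"
    using ess_towards_entrant[of u] u_in_Y u_ne_t gdist_towards_entrant_Y(1)[of u] joined_G0_G1 anchor_facts
    by (simp add: broker_share_def)
  ultimately show ?thesis by (simp add: algebra_simps)
qed

lemma util_gain_anchor_link:
  "util b c gam N G1 t - util b c gam N G0 t = b 1 - b 2 - c + 2 * gam * (b 2 - b 3)"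
proof -
  have ng: "{t, u} \<notin> G0" using notin_of_nbr[OF _ not_nbr_G0_t_u] u_ne_t by simp
  show ?thesis
    unfolding util_insert_diff[OF finite_N links_within_entrant_net[OF anchor_facts(1)] anchor_facts(2,3)
        u_ne_t[symmetric] ng] reach_value_gain_anchor broker_share_gain_anchor
    by simp
qed

end

context entrant_setting_large
begin

lemma util_link_gain_anchor:
  assumes "t \<in> Y" "u \<in> Y" "u \<noteq> t"
  shows "util b c gam N (insert {t, u} (entrant_net Y Z x {t})) t - util b c gam N (entrant_net Y Z x {t}) t
     = b 1 - b 2 - c + 2 * gam * (b 2 - b 3)"
proof -
  interpret anchored_link b gam Y Z x N t u
    by (intro anchored_link.intro entrant_setting_large_axioms anchored_link_axioms.intro assms)
  show ?thesis by (rule util_gain_anchor_link)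
qed

end

lemma nbr_path3:
  assumes "distinct [v1, v2, v3]"
  shows "nbr {{v1, v2}, {v2, v3}} a bb \<longleftrightarrow>
    (a = v1 \<and> bb = v2) \<or> (a = v2 \<and> bb = v1) \<or> (a = v2 \<and> bb = v3) \<or> (a = v3 \<and> bb = v2)"
  using assms unfolding nbr_def by (auto simp: doubleton_eq_iff)

lemma nbr_cycle4:
  assumes "distinct [v1, v2, v3, v4]"
  shows "nbr {{v1, v2}, {v2, v3}, {v3, v4}, {v4, v1}} a bb \<longleftrightarrow>
    (a = v1 \<and> bb = v2) \<or> (a = v2 \<and> bb = v1) \<or> (a = v2 \<and> bb = v3) \<or> (a = v3 \<and> bb = v2) \<or>
    (a = v3 \<and> bb = v4) \<or> (a = v4 \<and> bb = v3) \<or> (a = v4 \<and> bb = v1) \<or> (a = v1 \<and> bb = v4)"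
  using assms unfolding nbr_def by (auto simp: doubleton_eq_iff)

lemma nbr_path4:
  assumes "distinct [v1, v2, v3, v4]"
  shows "nbr {{v1, v2}, {v2, v3}, {v3, v4}} a bb \<longleftrightarrow>
    (a = v1 \<and> bb = v2) \<or> (a = v2 \<and> bb = v1) \<or> (a = v2 \<and> bb = v3) \<or> (a = v3 \<and> bb = v2) \<or>
    (a = v3 \<and> bb = v4) \<or> (a = v4 \<and> bb = v3)"
  using assms unfolding nbr_def by (auto simp: doubleton_eq_iff)

context benefit_params
begin

lemma util_chord_path3_gain:
  assumes d: "distinct [v1, v2, v3]" and N: "N = {v1, v2, v3}"
  shows "util b c gam N (insert {v1, v3} {{v1, v2}, {v2, v3}}) v1 - util b c gam N {{v1, v2}, {v2, v3}} v1
     \<le> b 1 - c - b 2 + gam * b 2"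
proof -
  let ?g = "{{v1, v2}, {v2, v3}} :: network"
  note nb = nbr_path3[OF d]
  have fin: "finite N" using N by simp
  have E: "links_within N ?g" unfolding links_within_def nb N by auto
  have pN: "v1 \<in> N" and kN: "v3 \<in> N" using N by auto
  have pk: "v1 \<noteq> v3" using d by simp
  have ng: "{v1, v3} \<notin> ?g" using d by (auto simp: doubleton_eq_iff)
  have m1: "nbr ?g v1 v2" and m2: "nbr ?g v2 v3" by (simp_all add: nb)
  have nc: "\<forall>y\<in>N. \<forall>z\<in>N. v1 \<notin> ess N ?g y z"
  proof (intro ballI)
    fix y z assume yz: "y \<in> N" "z \<in> N"
    show "v1 \<notin> ess N ?g y z"
    proof (cases "v1 = y \<or> v1 = z")
      case True then show ?thesis by (rule ess_endpoint)
    next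
      case False
      then have "y = z \<or> nbr ?g y z" using yz N d by (auto simp: nb)
      then show ?thesis using ess_self[of N ?g y] ess_nbr[of ?g y z N] by auto
    qed
  qed
  have dp: "\<forall>w\<in>N-{v1,v3}. joined ?g v1 w \<and> gdist (insert {v1, v3} ?g) v1 w = gdist ?g v1 w"
  proof
    fix w assume "w \<in> N - {v1, v3}"
    then have "w = v2" using N by auto
    then show "joined ?g v1 w \<and> gdist (insert {v1, v3} ?g) v1 w = gdist ?g v1 w"
      using joined_if_nbr[OF m1] gdist_supergraph_nbr[OF _ m1, of "insert {v1, v3} ?g"] by auto
  qed
  have es: "\<forall>w\<in>N-{v1}. ess N ?g v1 w \<noteq> {} \<longrightarrow> w = v3 \<and> 2 \<le> gdist ?g v1 v3"
  proof (intro ballI impI)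
    fix w assume w: "w \<in> N - {v1}" "ess N ?g v1 w \<noteq> {}"
    have "w \<noteq> v2" using w ess_nbr[OF m1] by auto
    then have "w = v3" using w N by auto
    moreover have "gdist ?g v1 v3 = 2" by (rule gdist_eq2[OF pk _ m1 m2]) (use d in \<open>simp add: nb\<close>)
    ultimately show "w = v3 \<and> 2 \<le> gdist ?g v1 v3" by simp
  qed
  show ?thesis by (rule util_close_2path_gain_le[OF fin E pN kN pk ng m1 m2 nc dp es])
qed

lemma ess_cycle4_diagonal:
  assumes "distinct [v1, v2, v3, v4]"
  shows "ess N {{v1, v2}, {v2, v3}, {v3, v4}, {v4, v1}} v1 v3 = {}"
proof -
  let ?g = "{{v1, v2}, {v2, v3}, {v3, v4}, {v4, v1}} :: network"
  have p: "gpath ?g [v1, v2, v3] v1 v3" "gpath ?g [v1, v4, v3] v1 v3"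
    using assms by (auto intro!: gpath3 simp: nbr_cycle4[OF assms])
  show ?thesis
  proof (rule equals0I)
    fix v assume "v \<in> ess N ?g v1 v3"
    then have "v \<in> set [v1, v2, v3]" "v \<in> set [v1, v4, v3]" "v \<noteq> v1" "v \<noteq> v3"
      using p unfolding ess_def by blast+
    then show False using assms by auto
  qed
qed

lemma ess_cycle4:
  assumes d: "distinct [v1, v2, v3, v4]" and yz: "y \<in> {v1, v2, v3, v4}" "z \<in> {v1, v2, v3, v4}"
  shows "ess N {{v1, v2}, {v2, v3}, {v3, v4}, {v4, v1}} y z = {}"
proof -
  let ?g = "{{v1, v2}, {v2, v3}, {v3, v4}, {v4, v1}} :: network"
  have rot: "?g = {{v2, v3}, {v3, v4}, {v4, v1}, {v1, v2}}" by auto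
  have d': "distinct [v2, v3, v4, v1]" using d by auto
  consider "y = z" | "nbr ?g y z" | "{y, z} = {v1, v3}" | "{y, z} = {v2, v4}"
    using yz d by (auto simp: nbr_cycle4[OF d] doubleton_eq_iff)
  then show ?thesis
  proof cases
    case 3
    then show ?thesis using ess_cycle4_diagonal[OF d] ess_sym by (auto simp: doubleton_eq_iff)
  next
    case 4
    then show ?thesis using ess_cycle4_diagonal[OF d'] ess_sym unfolding rot[symmetric]
      by (auto simp: doubleton_eq_iff)
  qed (simp_all add: ess_self ess_nbr)
qed

lemma util_chord_cycle4_gain:
  assumes d: "distinct [v1, v2, v3, v4]" and N: "N = {v1, v2, v3, v4}"
  shows "util b c gam N (insert {v1, v3} {{v1, v2}, {v2, v3}, {v3, v4}, {v4, v1}}) v1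
      - util b c gam N {{v1, v2}, {v2, v3}, {v3, v4}, {v4, v1}} v1
     \<le> b 1 - c - b 2 + gam * b 2"
proof -
  let ?g = "{{v1, v2}, {v2, v3}, {v3, v4}, {v4, v1}} :: network"
  note nb = nbr_cycle4[OF d]
  have E: "links_within N ?g" unfolding links_within_def nb N by auto
  have ng: "{v1, v3} \<notin> ?g" using d by (auto simp: doubleton_eq_iff)
  have m: "nbr ?g v1 v2" "nbr ?g v2 v3" "nbr ?g v1 v4" by (simp_all add: nb)
  have dp: "\<forall>w\<in>N-{v1,v3}. joined ?g v1 w \<and> gdist (insert {v1, v3} ?g) v1 w = gdist ?g v1 w"
    using N joined_if_nbr[OF m(1)] gdist_supergraph_nbr[OF subset_insertI m(1)]
      joined_if_nbr[OF m(3)] gdist_supergraph_nbr[OF subset_insertI m(3)] by auto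
  show ?thesis
    by (rule util_close_2path_gain_le[OF _ E _ _ _ ng m(1,2) _ dp, where ww = v1])
      (use d N ess_cycle4[OF d] in auto)
qed

end

text \<open>Sides of sizes 2 and 1 with a single anchor form a path on four nodes.\<close>
locale path4_chord = benefit_params +
  fixes v1 v2 v3 v4 :: nat
  assumes distinct_path: "distinct [v1, v2, v3, v4]"
begin

abbreviation P :: network where "P \<equiv> {{v1, v2}, {v2, v3}, {v3, v4}}"

abbreviation P' :: network where "P' \<equiv> insert {v2, v4} P"

abbreviation V :: "nat set" where "V \<equiv> {v1, v2, v3, v4}"

lemma P_subset_P': "P \<subseteq> P'"
  by auto

lemma nbr_P: "nbr P a bb \<longleftrightarrow>
    (a = v1 \<and> bb = v2) \<or> (a = v2 \<and> bb = v1) \<or> (a = v2 \<and> bb = v3) \<or> (a = v3 \<and> bb = v2) \<or>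
    (a = v3 \<and> bb = v4) \<or> (a = v4 \<and> bb = v3)"
  using nbr_path4[OF distinct_path] .

lemma nbr_P': "nbr P' a bb \<longleftrightarrow> nbr P a bb \<or> (a = v2 \<and> bb = v4) \<or> (a = v4 \<and> bb = v2)"
  using distinct_path unfolding nbr_insert by auto

lemma reach_value_gain_chord:
  "(\<Sum>w\<in>V-{v2}. reach_value b gam V P' v2 w - reach_value b gam V P v2 w) = b 1 - (1 - gam) * b 2"
proof -
  have dd: "v1 \<noteq> v2" "v1 \<noteq> v3" "v1 \<noteq> v4" "v2 \<noteq> v3" "v2 \<noteq> v4" "v3 \<noteq> v4" using distinct_path by auto
  have "(\<Sum>w\<in>V-{v2}. reach_value b gam V P' v2 w - reach_value b gam V P v2 w)
      = reach_value b gam V P' v2 v4 - reach_value b gam V P v2 v4"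
  proof (rule sum_eq_single_term)
    show "\<forall>w\<in>V - {v2}. w \<noteq> v4 \<longrightarrow> reach_value b gam V P' v2 w - reach_value b gam V P v2 w = 0"
    proof (intro ballI impI)
      fix w assume "w \<in> V - {v2}" "w \<noteq> v4"
      then have "nbr P v2 w" by (auto simp: nbr_P)
      then show "reach_value b gam V P' v2 w - reach_value b gam V P v2 w = 0"
        using reach_value_nbr[of P v2 w V] reach_value_nbr[OF nbr_mono[OF P_subset_P'], of v2 w V] by simp
    qed
  qed (use dd in auto)
  moreover have "reach_value b gam V P' v2 v4 = b 1" by (rule reach_value_nbr) (simp add: nbr_P')
  moreover have "reach_value b gam V P v2 v4 = b 2 * (1 - gam)"
  proof -
    have "gdist P v2 v4 = 2" by (rule gdist_eq2[where m = v3]) (use dd in \<open>auto simp: nbr_P\<close>)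
    moreover have "v3 \<in> ess V P v2 v4"
      by (rule ess_if_separates[where C = "{v1, v2}"]) (use dd in \<open>auto simp: nbr_P\<close>)
    moreover have "joined P v2 v4" by (rule joinedI[OF gpath3[where m = v3]]) (use dd in \<open>auto simp: nbr_P\<close>)
    ultimately show ?thesis unfolding reach_value_def by auto
  qed
  ultimately show ?thesis by simp
qed

lemma gpath_v1_v3: "gpath P [v1, v2, v3] v1 v3"
  by (rule gpath3) (use distinct_path in \<open>auto simp: nbr_P\<close>)

lemma v2_separates_v1: "gg \<subseteq> P' \<Longrightarrow> \<forall>a\<in>{v1}. \<forall>b'. nbr gg a b' \<longrightarrow> b' \<in> {v1} \<or> b' = v2"
  using distinct_path by (auto simp: nbr_P nbr_P' dest: nbr_mono)

lemma broker_share_chord_v1_v3: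
  "broker_share b gam V P' v2 (v1, v3) = broker_share b gam V P v2 (v1, v3)"
proof -
  have dd: "v1 \<noteq> v2" "v1 \<noteq> v3" "v1 \<noteq> v4" "v2 \<noteq> v3" "v2 \<noteq> v4" "v3 \<noteq> v4" using distinct_path by auto
  have "ess V gg v1 v3 = {v2} \<and> gdist gg v1 v3 = 2 \<and> joined gg v1 v3" if gg: "P \<subseteq> gg" "gg \<subseteq> P'" for gg
  proof -
    have p: "gpath gg [v1, v2, v3] v1 v3" by (rule gpath_subset[OF gpath_v1_v3 gg(1)])
    have "v2 \<in> ess V gg v1 v3"
      by (rule ess_if_separates[where C = "{v1}", OF _ _ _ _ _ _ v2_separates_v1[OF gg(2)]]) (use dd in auto)
    moreover have "v4 \<notin> ess V gg v1 v3" using notin_ess_if_avoided[OF p] dd by simp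
    moreover have "ess V gg v1 v3 \<subseteq> V - {v1, v3}" unfolding ess_def by auto
    moreover have "\<not> nbr gg v1 v3" using dd nbr_mono[OF gg(2), of v1 v3] by (auto simp: nbr_P' nbr_P)
    moreover have "nbr gg v1 v2" "nbr gg v2 v3" using nbr_mono[OF gg(1)] by (auto simp: nbr_P)
    ultimately show ?thesis using gdist_eq2[of v1 v3 gg v2] dd joinedI[OF p] by auto
  qed
  from this[OF subset_refl P_subset_P'] this[OF P_subset_P' subset_refl] show ?thesis
    by (simp add: broker_share_def)
qed

lemma broker_share_chord_v1_v4:
  "broker_share b gam V P v2 (v1, v4) = gam * b 3" "broker_share b gam V P' v2 (v1, v4) = gam * 2 * b 2"
proof -
  have dd: "v1 \<noteq> v2" "v1 \<noteq> v3" "v1 \<noteq> v4" "v2 \<noteq> v3" "v2 \<noteq> v4" "v3 \<noteq> v4" using distinct_path by auto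
  have p: "gpath P [v1, v2, v3, v4] v1 v4" by (rule gpath4) (use dd in \<open>auto simp: nbr_P\<close>)
  have p': "gpath P' [v1, v2, v4] v1 v4" by (rule gpath3) (use dd in \<open>auto simp: nbr_P nbr_P'\<close>)
  have "v2 \<in> ess V P v1 v4"
    by (rule ess_if_separates[where C = "{v1}", OF _ _ _ _ _ _ v2_separates_v1[OF P_subset_P']]) (use dd in auto)
  moreover have "v3 \<in> ess V P v1 v4"
    by (rule ess_if_separates[where C = "{v1, v2}"]) (use dd in \<open>auto simp: nbr_P\<close>)
  moreover have "ess V P v1 v4 \<subseteq> V - {v1, v4}" unfolding ess_def by auto
  ultimately have "ess V P v1 v4 = {v2, v3}" using dd by auto
  moreover have "gdist P v1 v4 = 3"
    by (rule gdist_eq3[of v1 v4 P v2 v3]) (use dd in \<open>auto simp: nbr_P\<close>)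
  ultimately show "broker_share b gam V P v2 (v1, v4) = gam * b 3"
    using joinedI[OF p] dd by (simp add: broker_share_def)
  have "v2 \<in> ess V P' v1 v4"
    by (rule ess_if_separates[where C = "{v1}", OF _ _ _ _ _ _ v2_separates_v1[OF subset_refl]]) (use dd in auto)
  moreover have "v3 \<notin> ess V P' v1 v4" using notin_ess_if_avoided[OF p'] dd by simp
  moreover have "ess V P' v1 v4 \<subseteq> V - {v1, v4}" unfolding ess_def by auto
  ultimately have "ess V P' v1 v4 = {v2}" using dd by auto
  moreover have "gdist P' v1 v4 = 2" by (rule gdist_eq2[where m = v2]) (use dd in \<open>auto simp: nbr_P nbr_P'\<close>)
  ultimately show "broker_share b gam V P' v2 (v1, v4) = gam * 2 * b 2"
    using joinedI[OF p'] by (simp add: broker_share_def)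
qed

lemma broker_share_gain_chord:
  "(\<Sum>q\<in>node_pairs V. broker_share b gam V P' v2 q - broker_share b gam V P v2 q) = gam * 2 * b 2 - gam * b 3"
proof -
  have dd: "v1 \<noteq> v2" "v1 \<noteq> v3" "v1 \<noteq> v4" "v2 \<noteq> v3" "v2 \<noteq> v4" "v3 \<noteq> v4" using distinct_path by auto
  let ?q0 = "(min v1 v4, max v1 v4)"
  have swap: "broker_share b gam V gg v2 (a, bb) = broker_share b gam V gg v2 (min a bb, max a bb)" for gg a bb
    using broker_share_swap[of b gam V gg v2 a bb] by (cases "a \<le> bb") (auto simp: min_def max_def)
  have v3_v4: "broker_share b gam V gg v2 (v3, v4) = 0" if "P \<subseteq> gg" for gg
    using ess_nbr[OF nbr_mono[OF that]] by (simp add: broker_share_def nbr_P)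
  have "(\<Sum>q\<in>node_pairs V. broker_share b gam V P' v2 q - broker_share b gam V P v2 q)
      = broker_share b gam V P' v2 ?q0 - broker_share b gam V P v2 ?q0"
  proof (rule sum_eq_single_term)
    show "\<forall>q\<in>node_pairs V. q \<noteq> ?q0 \<longrightarrow> broker_share b gam V P' v2 q - broker_share b gam V P v2 q = 0"
    proof (intro ballI impI)
      fix q assume q: "q \<in> node_pairs V" "q \<noteq> ?q0"
      obtain a bb where ab: "q = (a, bb)" "a \<in> V" "bb \<in> V" "a < bb"
        using q(1) unfolding node_pairs_def by (cases q) auto
      have q_min_max: "q = (min a bb, max a bb)" using ab by simp
      consider "a = v2 \<or> bb = v2" | "{a, bb} = {v1, v3}" | "{a, bb} = {v3, v4}"
        using ab q(2) dd by (auto simp: min_def max_def doubleton_eq_iff)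
      then show "broker_share b gam V P' v2 q - broker_share b gam V P v2 q = 0"
      proof cases
        case 1
        then show ?thesis by (auto simp: ab(1) broker_share_def ess_def)
      next
        case 2
        then have "q = (min v1 v3, max v1 v3)" using q_min_max by (auto simp: doubleton_eq_iff)
        then show ?thesis using broker_share_chord_v1_v3 swap by simp
      next
        case 3
        then have "q = (min v3 v4, max v3 v4)" using q_min_max by (auto simp: doubleton_eq_iff)
        then show ?thesis using v3_v4[OF subset_refl] v3_v4[OF P_subset_P'] swap by simp
      qed
    qed
  qed (use dd finite_node_pairs[of V] in \<open>auto simp: node_pairs_def min_def max_def\<close>)
  then show ?thesis using broker_share_chord_v1_v4 swap[of _ v1 v4] by simp
qed

lemma util_gain_chord:
  "util b c gam V P' v2 - util b c gam V P v2 = b 1 - c - b 2 + gam * (3 * b 2 - b 3)"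
proof -
  have E: "links_within V P" unfolding links_within_def nbr_P by auto
  have ng: "{v2, v4} \<notin> P" using distinct_path by (auto simp: doubleton_eq_iff)
  have v24: "finite V" "v2 \<in> V" "v4 \<in> V" "v2 \<noteq> v4" using distinct_path by auto
  show ?thesis
    unfolding util_insert_diff[OF v24(1) E v24(2,3,4) ng] reach_value_gain_chord broker_share_gain_chord
    by (simp add: algebra_simps)
qed

end

context benefit_params
begin

lemma util_chord_path4_gain:
  assumes "distinct [v1, v2, v3, v4]" and "N = {v1, v2, v3, v4}"
  shows "util b c gam N (insert {v2, v4} {{v1, v2}, {v2, v3}, {v3, v4}}) v2
     - util b c gam N {{v1, v2}, {v2, v3}, {v3, v4}} v2
     = b 1 - c - b 2 + gam * (3 * b 2 - b 3)"
proof -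
  interpret path4_chord b gam v1 v2 v3 v4
    by (intro path4_chord.intro benefit_params_axioms path4_chord_axioms.intro assms(1))
  show ?thesis unfolding assms(2) by (rule util_gain_chord)
qed

end

section \<open>Improving moves and entry\<close>

context entrant_setting_large
begin

lemma same_side_link_rejected_large:
  assumes cl: "b 1 - b 2 + gam * (3 * b 2 - b 3) < c"
    and SY: "S \<subseteq> Y" and Sne: "S \<noteq> {}" and iN: "i \<in> N" and kN: "k \<in> N" and ik: "i \<noteq> k"
    and side: "(i \<in> Y \<and> k \<in> Y) \<or> (i \<notin> Y \<and> k \<notin> Y)"
  shows "\<exists>p\<in>{i, k}. util b c gam N (insert {i, k} (entrant_net Y Z x S)) p < util b c gam N (entrant_net Y Z x S) p"
proof -
  let ?G = "entrant_net Y Z x S"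
  note neg = link_gains_negative[OF cl]
  have Y_loses: "util b c gam N (insert {p, q} ?G) p < util b c gam N ?G p"
    if "p \<in> Y" "q \<in> Y" "p \<noteq> q" "S = {p} \<or> (S \<noteq> {q} \<and> (p \<in> S \<or> q \<notin> S))" for p q
  proof (cases "S = {p}")
    case True
    have "util b c gam N (insert {p, q} ?G) p - util b c gam N ?G p = b 1 - b 2 - c + 2 * gam * (b 2 - b 3)"
      unfolding True by (rule util_link_gain_anchor) (use that in auto)
    then show ?thesis using neg(2) by simp
  next
    case False
    then have "p \<in> S \<or> q \<notin> S" using that(4) by auto
    then have "util b c gam N (insert {p, q} ?G) p - util b c gam N ?G p \<le> b 1 - c - b 2 + gam * b 2"
      by (rule util_link_gain_Y_side[OF SY Sne that(1,2,3) False])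
    then show ?thesis using neg(1) by simp
  qed
  have Z_loses: "util b c gam N (insert {p, q} ?G) p < util b c gam N ?G p"
    if "p \<in> Z" "q \<in> insert x Z" "p \<noteq> q" for p q
    using util_link_gain_Z_side[OF SY Sne that, of c] neg(1) by simp
  have "util b c gam N (insert {i, k} ?G) i < util b c gam N ?G i \<or>
      util b c gam N (insert {k, i} ?G) k < util b c gam N ?G k"
  proof (cases "i \<in> Y \<and> k \<in> Y")
    case True
    then show ?thesis using Y_loses[of i k] Y_loses[of k i] ik by blast
  next
    case False
    then have "i \<in> insert x Z" "k \<in> insert x Z" using side iN kN N_def by auto
    then show ?thesis using Z_loses[of i k] Z_loses[of k i] ik by blast
  qed
  then show ?thesis by (auto simp: insert_commute)
qed

end

context entrant_setting
begin

lemma same_side_link_rejected_1_1: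
  assumes cl: "b 1 - b 2 + gam * (3 * b 2 - b 3) < c"
    and cY: "card Y = 1" and cZ: "card Z = 1"
    and SY: "S \<subseteq> Y" and Sne: "S \<noteq> {}" and iN: "i \<in> N" and kN: "k \<in> N" and ik: "i \<noteq> k"
    and side: "(i \<in> Y \<and> k \<in> Y) \<or> (i \<notin> Y \<and> k \<notin> Y)"
  shows "\<exists>p\<in>{i, k}. util b c gam N (insert {i, k} (entrant_net Y Z x S)) p < util b c gam N (entrant_net Y Z x S) p"
proof -
  obtain t where Y: "Y = {t}" using cY by (rule card_1_singletonE)
  obtain a where Z: "Z = {a}" using cZ by (rule card_1_singletonE)
  have S: "S = {t}" using SY Sne Y by auto
  have at: "a \<noteq> t" using Y Z YZ_disj by auto
  have ax: "a \<noteq> x" using Z x_notin_Z by auto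
  have tx: "t \<noteq> x" using Y x_notin_Y by auto
  have d: "distinct [a, t, x]" using at ax tx by simp
  have NN: "N = {a, t, x}" using N_def Y Z by auto
  have G: "entrant_net Y Z x S = {{a, t}, {t, x}}" unfolding entrant_net_def Y Z S by (auto simp: insert_commute)
  have ik': "{i, k} = {a, x}" using side iN kN ik Y NN by auto
  have "util b c gam N (insert {a, x} {{a, t}, {t, x}}) a - util b c gam N {{a, t}, {t, x}} a
      \<le> b 1 - c - b 2 + gam * b 2" by (rule util_chord_path3_gain[OF d NN])
  then have "util b c gam N (insert {i, k} (entrant_net Y Z x S)) a < util b c gam N (entrant_net Y Z x S) a"
    using link_gains_negative(1)[OF cl] unfolding G ik' by simp
  moreover have "a \<in> {i, k}" using ik' by auto
  ultimately show ?thesis by blast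
qed

lemma same_side_link_rejected_2_1_single:
  assumes cl: "b 1 - b 2 + gam * (3 * b 2 - b 3) < c"
    and Y: "Y = {t, u}" and tu: "t \<noteq> u" and Z: "Z = {a}" and S: "S = {t}"
    and iN: "i \<in> N" and kN: "k \<in> N" and ik: "i \<noteq> k"
    and side: "(i \<in> Y \<and> k \<in> Y) \<or> (i \<notin> Y \<and> k \<notin> Y)"
  shows "\<exists>p\<in>{i, k}. util b c gam N (insert {i, k} (entrant_net Y Z x S)) p < util b c gam N (entrant_net Y Z x S) p"
proof -
  have at: "a \<noteq> t" "a \<noteq> u" using Y Z YZ_disj by auto
  have ax: "a \<noteq> x" using Z x_notin_Z by auto
  have tx: "t \<noteq> x" "u \<noteq> x" using Y x_notin_Y by auto
  have NN: "N = {t, u, a, x}" using N_def Y Z by auto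
  have G: "entrant_net Y Z x S = {{x, t}, {t, a}, {a, u}}" unfolding entrant_net_def Y Z S by (auto simp: insert_commute)
  note nb = link_gains_negative(3)[OF cl]
  consider "{i, k} = {t, u}" | "{i, k} = {a, x}" using side iN kN ik Y NN at ax tx by auto
  then show ?thesis
  proof cases
    case 1
    have d: "distinct [x, t, a, u]" using at ax tx tu by auto
    have "util b c gam N (insert {t, u} {{x, t}, {t, a}, {a, u}}) t - util b c gam N {{x, t}, {t, a}, {a, u}} t
      = b 1 - c - b 2 + gam * (3 * b 2 - b 3)" by (rule util_chord_path4_gain[OF d]) (use NN in auto)
    then have "util b c gam N (insert {i, k} (entrant_net Y Z x S)) t < util b c gam N (entrant_net Y Z x S) t"
      using nb unfolding G 1 by simp
    moreover have "t \<in> {i, k}" using 1 by auto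
    ultimately show ?thesis by blast
  next
    case 2
    have d: "distinct [u, a, t, x]" using at ax tx tu by auto
    have G': "{{u, a}, {a, t}, {t, x}} = {{x, t}, {t, a}, {a, u}}" by (auto simp: insert_commute)
    have "util b c gam N (insert {a, x} {{u, a}, {a, t}, {t, x}}) a - util b c gam N {{u, a}, {a, t}, {t, x}} a
      = b 1 - c - b 2 + gam * (3 * b 2 - b 3)" by (rule util_chord_path4_gain[OF d]) (use NN in auto)
    then have "util b c gam N (insert {i, k} (entrant_net Y Z x S)) a < util b c gam N (entrant_net Y Z x S) a"
      using nb unfolding G 2 G' by simp
    moreover have "a \<in> {i, k}" using 2 by auto
    ultimately show ?thesis by blast
  qed
qed

lemma same_side_link_rejected_2_1_both:
  assumes cl: "b 1 - b 2 + gam * (3 * b 2 - b 3) < c"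
    and Y: "Y = {t, u}" and tu: "t \<noteq> u" and Z: "Z = {a}" and S: "S = {t, u}"
    and iN: "i \<in> N" and kN: "k \<in> N" and ik: "i \<noteq> k"
    and side: "(i \<in> Y \<and> k \<in> Y) \<or> (i \<notin> Y \<and> k \<notin> Y)"
  shows "\<exists>p\<in>{i, k}. util b c gam N (insert {i, k} (entrant_net Y Z x S)) p < util b c gam N (entrant_net Y Z x S) p"
proof -
  have at: "a \<noteq> t" "a \<noteq> u" using Y Z YZ_disj by auto
  have ax: "a \<noteq> x" using Z x_notin_Z by auto
  have tx: "t \<noteq> x" "u \<noteq> x" using Y x_notin_Y by auto
  have NN: "N = {t, u, a, x}" using N_def Y Z by auto
  have G: "entrant_net Y Z x S = {{t, a}, {a, u}, {u, x}, {x, t}}" unfolding entrant_net_def Y Z S by (auto simp: insert_commute)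
  note nb = link_gains_negative(1)[OF cl]
  consider "{i, k} = {t, u}" | "{i, k} = {a, x}" using side iN kN ik Y NN at ax tx by auto
  then show ?thesis
  proof cases
    case 1
    have d: "distinct [t, a, u, x]" using at ax tx tu by auto
    have "util b c gam N (insert {t, u} {{t, a}, {a, u}, {u, x}, {x, t}}) t - util b c gam N {{t, a}, {a, u}, {u, x}, {x, t}} t
      \<le> b 1 - c - b 2 + gam * b 2" by (rule util_chord_cycle4_gain[OF d]) (use NN in auto)
    then have "util b c gam N (insert {i, k} (entrant_net Y Z x S)) t < util b c gam N (entrant_net Y Z x S) t"
      using nb unfolding G 1 by simp
    moreover have "t \<in> {i, k}" using 1 by auto
    ultimately show ?thesis by blast
  next
    case 2
    have d: "distinct [a, u, x, t]" using at ax tx tu by auto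
    have G': "{{a, u}, {u, x}, {x, t}, {t, a}} = {{t, a}, {a, u}, {u, x}, {x, t}}" by (auto simp: insert_commute)
    have "util b c gam N (insert {a, x} {{a, u}, {u, x}, {x, t}, {t, a}}) a - util b c gam N {{a, u}, {u, x}, {x, t}, {t, a}} a
      \<le> b 1 - c - b 2 + gam * b 2" by (rule util_chord_cycle4_gain[OF d]) (use NN in auto)
    then have "util b c gam N (insert {i, k} (entrant_net Y Z x S)) a < util b c gam N (entrant_net Y Z x S) a"
      using nb unfolding G 2 G' by simp
    moreover have "a \<in> {i, k}" using 2 by auto
    ultimately show ?thesis by blast
  qed
qed

text \<open>Implied by card Z \<le> card Y \<le> card Z + 1 and Y \<noteq> {}; the sizes below 2 are listed
  separately because they are settled case by case.\<close>
definition balanced_sides :: bool where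
  "balanced_sides \<longleftrightarrow> (card Y = 1 \<and> card Z = 0) \<or> (card Y = 1 \<and> card Z = 1) \<or> (card Y = 2 \<and> card Z = 1)
     \<or> (2 \<le> card Y \<and> 2 \<le> card Z)"

lemma same_side_link_rejected:
  assumes cl: "b 1 - b 2 + gam * (3 * b 2 - b 3) < c" and sc: balanced_sides
    and SY: "S \<subseteq> Y" and Sne: "S \<noteq> {}" and iN: "i \<in> N" and kN: "k \<in> N" and ik: "i \<noteq> k"
    and side: "(i \<in> Y \<and> k \<in> Y) \<or> (i \<notin> Y \<and> k \<notin> Y)"
  shows "\<exists>p\<in>{i, k}. util b c gam N (insert {i, k} (entrant_net Y Z x S)) p < util b c gam N (entrant_net Y Z x S) p"
proof -
  consider "card Y = 1" "card Z = 0" | "card Y = 1" "card Z = 1" | "card Y = 2" "card Z = 1"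
    | "2 \<le> card Y" "2 \<le> card Z" using sc unfolding balanced_sides_def by argo
  then show ?thesis
  proof cases
    case 1
    obtain t where Y: "Y = {t}" using 1(1) by (rule card_1_singletonE)
    have "Z = {}" using 1(2) finite_Z by simp
    then have "N = {t, x}" using N_def Y by auto
    then have False using side iN kN ik Y by auto
    then show ?thesis ..
  next
    case 2 then show ?thesis using same_side_link_rejected_1_1[OF cl _ _ SY Sne iN kN ik side] by blast
  next
    case 3
    obtain t u where Y: "Y = {t, u}" and tu: "t \<noteq> u" using 3(1) unfolding card_2_iff by blast
    obtain a where Z: "Z = {a}" using 3(2) by (rule card_1_singletonE)
    have "S = {t} \<or> S = {u} \<or> S = {t, u}" using SY Sne Y by auto
    then consider "S = {t}" | "S = {u}" | "S = {t, u}" by argo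
    then show ?thesis
    proof cases
      case 1 then show ?thesis using same_side_link_rejected_2_1_single[OF cl Y tu Z _ iN kN ik side] by blast
    next
      case 2
      have Y': "Y = {u, t}" using Y by auto
      show ?thesis using same_side_link_rejected_2_1_single[OF cl Y' tu[symmetric] Z 2 iN kN ik side] .
    next
      case 3 then show ?thesis using same_side_link_rejected_2_1_both[OF cl Y tu Z _ iN kN ik side] by blast
    qed
  next
    case 4
    interpret G: entrant_setting_large b gam Y Z x N by unfold_locales (use 4 in auto)
    show ?thesis by (rule G.same_side_link_rejected_large[OF cl SY Sne iN kN ik side])
  qed
qed

lemma insert_cross_link_entrant_net:
  assumes SY: "S \<subseteq> Y" and i: "i \<in> Y" and k: "k \<in> N - Y" and new: "{i, k} \<notin> entrant_net Y Z x S"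
  shows "i \<in> Y - S \<and> insert {i, k} (entrant_net Y Z x S) = entrant_net Y Z x (insert i S)"
proof -
  have "nbr (entrant_net Y Z x S) i k \<Longrightarrow> False" using new unfolding nbr_def by simp
  then have "k = x" "i \<notin> S" using i k N_def x_notin_Y by (auto simp: nbr_entrant_net[OF SY])
  then show ?thesis using i by (simp add: entrant_net_insert insert_commute)
qed

lemma move_entrant_net:
  assumes cl: "b 1 - b 2 + gam * (3 * b 2 - b 3) < c" and ch: "c < b 1 - b 3" and sc: balanced_sides
    and SY: "S \<subseteq> Y" and Sne: "S \<noteq> {}" and mv: "move b c gam N (entrant_net Y Z x S) g'"
  shows "\<exists>u\<in>Y-S. g' = entrant_net Y Z x (insert u S)"
proof -
  let ?G = "entrant_net Y Z x S"
  obtain i where iN: "i \<in> N" and opt: "g' \<in> options b c gam N ?G i"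
    and gain: "util b c gam N g' i > util b c gam N ?G i"
    using mv unfolding move_def by blast
  from opt consider (add) k where "g' = insert {i, k} ?G" "k \<in> N" "k \<noteq> i" "{i, k} \<notin> ?G"
      "util b c gam N (insert {i, k} ?G) k \<ge> util b c gam N ?G k"
    | (del) k where "g' = ?G - {{i, k}}" "nbr ?G i k"
    unfolding options_def by blast
  then show ?thesis
  proof cases
    case del
    have "util b c gam N g' i < util b c gam N ?G i"
      unfolding del(1) by (rule util_delete_bipartite_lt[OF finite_N iN links_within_entrant_net[OF SY] del(2)
          bipartite_by_entrant_net[OF SY] ch])
    then show ?thesis using gain by simp
  next
    case add
    consider "(i \<in> Y \<and> k \<in> Y) \<or> (i \<notin> Y \<and> k \<notin> Y)" | "i \<in> Y" "k \<in> N - Y" | "k \<in> Y" "i \<in> N - Y"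
      using iN add(2) by blast
    then show ?thesis
    proof cases
      case 1
      obtain p where p: "p \<in> {i, k}" "util b c gam N (insert {i, k} ?G) p < util b c gam N ?G p"
        using same_side_link_rejected[OF cl sc SY Sne iN add(2) add(3)[symmetric] 1] by blast
      then show ?thesis using gain add(1) add(5) by auto
    next
      case 2
      then show ?thesis using insert_cross_link_entrant_net[OF SY _ _ add(4)] add(1) by blast
    next
      case 3
      then show ?thesis
        using insert_cross_link_entrant_net[OF SY, of k i] add(1,4) by (auto simp: insert_commute)
    qed
  qed
qed

lemma pairwise_stable_entrant_net:
  assumes ch: "c < b 1 - b 3" and SY: "S \<subseteq> Y" and Sne: "S \<noteq> {}"
    and ps: "pairwise_stable b c gam N (entrant_net Y Z x S)"
  shows "S = Y"
proof (rule ccontr)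
  assume "S \<noteq> Y"
  then obtain u where u: "u \<in> Y" "u \<notin> S" using SY by blast
  let ?G = "entrant_net Y Z x S"
  note nb = nbr_entrant_net[OF SY]
  have xN: "x \<in> N" and uN: "u \<in> N" using N_def u by auto
  have xu: "x \<noteq> u" using u x_notin_Y by auto
  have nxu: "\<not> nbr ?G x u" using xu by (simp add: nb u x_notin_Y x_notin_Z)
  have ng: "{x, u} \<notin> ?G" by (rule notin_of_nbr[OF xu nxu])
  have ng': "{u, x} \<notin> ?G" using ng by (simp add: insert_commute)
  have nc: "\<not> (\<exists>m. nbr ?G x m \<and> nbr ?G m u)"
  proof
    assume "\<exists>m. nbr ?G x m \<and> nbr ?G m u"
    then obtain m where m: "nbr ?G x m" "nbr ?G m u" by blast
    have "m \<in> S" using m(1) x_notin_Y x_notin_Z SY by (auto simp add: nb)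
    then have "m \<in> Y" "m \<noteq> x" using SY x_notin_Y by auto
    then show False using m(2) u YZ_disj x_notin_Y by (auto simp: nb)
  qed
  have nc': "\<not> (\<exists>m. nbr ?G u m \<and> nbr ?G m x)" using nc nbr_sym by metis
  have g1: "util b c gam N ?G x < util b c gam N (insert {x, u} ?G) x"
    by (rule util_insert_far_gt[OF finite_N links_within_entrant_net[OF SY] xN uN xu ng nc ch])
  have g2: "util b c gam N ?G u < util b c gam N (insert {u, x} ?G) u"
    by (rule util_insert_far_gt[OF finite_N links_within_entrant_net[OF SY] uN xN xu[symmetric] ng' nc' ch])
  have "util b c gam N (insert {x, u} ?G) u < util b c gam N ?G u"
    using ps xN uN xu ng g1 unfolding pairwise_stable_def by blast
  then show False using g2 by (simp add: insert_commute)
qed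

lemma moves_entrant_net:
  assumes cl: "b 1 - b 2 + gam * (3 * b 2 - b 3) < c" and ch: "c < b 1 - b 3" and sc: balanced_sides
  shows "(move b c gam N)\<^sup>*\<^sup>* (entrant_net Y Z x S0) g' \<Longrightarrow> S0 \<subseteq> Y \<Longrightarrow> S0 \<noteq> {} \<Longrightarrow>
    \<exists>S. S0 \<subseteq> S \<and> S \<subseteq> Y \<and> g' = entrant_net Y Z x S"
proof (induction rule: rtranclp_induct)
  case base
  then show ?case by blast
next
  case (step g1 g2)
  then obtain S where S: "S0 \<subseteq> S" "S \<subseteq> Y" "g1 = entrant_net Y Z x S" by blast
  then have "S \<noteq> {}" using step.prems by blast
  then obtain u where "u \<in> Y - S" "g2 = entrant_net Y Z x (insert u S)"
    using move_entrant_net[OF cl ch sc S(2)] step.hyps(2) S(3) by blast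
  then show ?case using S by blast
qed

lemma broker_share_entrant_zero:
  assumes Yne: "Y \<noteq> {}" and Zne: "Z \<noteq> {}" and t: "t \<in> Y" and q: "q \<in> node_pairs N"
  shows "broker_share b gam N (entrant_net Y Z x {t}) x q = 0"
proof -
  obtain a bb where ab: "q = (a, bb)" "a \<in> N" "bb \<in> N" "a < bb" "a \<noteq> x" by (rule node_pairsE[OF q])
  have "x \<notin> ess N (entrant_net Y Z x {t}) a bb"
  proof (cases "bb = x")
    case True then show ?thesis by (simp add: ess_endpoint)
  next
    case False
    then have "a \<in> Y \<union> Z" "bb \<in> Y \<union> Z" using ab N_def by auto
    moreover have "\<exists>y\<in>Y. y \<noteq> x" "\<exists>z\<in>Z. z \<noteq> x" using Yne Zne x_notin_Y x_notin_Z by auto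
    ultimately obtain xs where "gpath (entrant_net Y Z x {t}) xs a bb" "x \<notin> set xs"
      using path_avoiding_within_YZ[of "{t}" x a bb] t ab(4) x_notin_Y x_notin_Z by auto
    then show ?thesis by (rule notin_ess_if_avoided)
  qed
  then show ?thesis unfolding broker_share_def ab(1) by simp
qed

lemma reach_value_entrant:
  assumes Zne: "Z \<noteq> {}" and t: "t \<in> Y"
  shows "w \<in> Z \<Longrightarrow> reach_value b gam N (entrant_net Y Z x {t}) x w = (1 - gam) * b 2"
    and "w \<in> Y - {t} \<Longrightarrow> reach_value b gam N (entrant_net Y Z x {t}) x w = (1 - gam) * b 3"
proof -
  let ?g = "entrant_net Y Z x {t}"
  have SY: "{t} \<subseteq> Y" using t by simp
  note nb = nbr_entrant_net[OF SY]
  have tx: "t \<noteq> x" using t x_notin_Y by blast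
  have only_t: "nbr ?g x m \<longleftrightarrow> m = t" for m using x_notin_Y x_notin_Z by (auto simp: nb)
  have xt: "nbr ?g x t" using only_t by simp
  have t_ess: "t \<in> ess N ?g x w" if "w \<in> Y \<union> Z" "w \<noteq> t" for w
    by (rule ess_if_separates[where C = "{x}"]) (use that t tx N_def x_notin_Y x_notin_Z only_t in auto)
  show "reach_value b gam N ?g x w = (1 - gam) * b 2" if w: "w \<in> Z"
  proof -
    have wt: "w \<noteq> t" and wx: "x \<noteq> w" using w t YZ_disj x_notin_Z by auto
    have tw: "nbr ?g t w" by (simp add: nb t w)
    have "gdist ?g x w = 2" by (rule gdist_eq2[OF wx _ xt tw]) (use only_t wt in simp)
    moreover have "joined ?g x w" by (rule joinedI[OF gpath3[OF xt tw wx]])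
    ultimately show ?thesis using t_ess[of w] w wt unfolding reach_value_def by auto
  qed
  show "reach_value b gam N ?g x w = (1 - gam) * b 3" if w: "w \<in> Y - {t}"
  proof -
    obtain z where z: "z \<in> Z" using Zne by blast
    have wx: "x \<noteq> w" and zx: "x \<noteq> z" using w z x_notin_Y x_notin_Z by auto
    have tz: "nbr ?g t z" and zw: "nbr ?g z w" using t z w by (auto simp: nb)
    have "\<not> nbr ?g t w" using t w YZ_disj x_notin_Y by (auto simp: nb)
    then have "gdist ?g x w = 3" by (intro gdist_eq3[OF wx _ _ xt tz zw]) (use only_t w in auto)
    moreover have "joined ?g x w" by (rule joinedI[OF gpath4[OF xt tz zw wx zx]]) (use w in simp)
    ultimately show ?thesis using t_ess[of w] w unfolding reach_value_def by auto
  qed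
qed

lemma util_entrant:
  assumes Yne: "Y \<noteq> {}" and Zne: "Z \<noteq> {}" and t: "t \<in> Y"
  shows "util b c gam N (entrant_net Y Z x {t}) x
     = b 1 - c + (1 - gam) * (real (card Z) * b 2 + (real (card Y) - 1) * b 3)"
proof -
  let ?g = "entrant_net Y Z x {t}"
  have SY: "{t} \<subseteq> Y" using t by simp
  have xN: "x \<in> N" using N_def by simp
  have "{m. nbr ?g x m} = {t}" using x_notin_Y x_notin_Z by (auto simp: nbr_entrant_net[OF SY])
  then have deg: "degree ?g x = 1" unfolding degree_def by simp
  have xt: "nbr ?g x t" by (simp add: nbr_entrant_net[OF SY])
  have "1 \<le> card Y" using t finite_Y card_gt_0_iff by (metis Suc_leI One_nat_def empty_iff)
  then have card_Y: "real (card (Y - {t})) = real (card Y) - 1"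
    using t finite_Y by (simp add: card_Diff_singleton of_nat_diff)
  have "(\<Sum>w\<in>N-{x}. reach_value b gam N ?g x w)
      = reach_value b gam N ?g x t + (\<Sum>w\<in>Y-{t}. reach_value b gam N ?g x w) + (\<Sum>w\<in>Z. reach_value b gam N ?g x w)"
  proof -
    have "N - {x} = Y \<union> Z" using N_def x_notin_Y x_notin_Z by auto
    then show ?thesis
      by (simp add: sum.union_disjoint[OF finite_Y finite_Z YZ_disj] sum.remove[OF finite_Y t])
  qed
  also have "\<dots> = b 1 + (real (card Y) - 1) * ((1 - gam) * b 3) + real (card Z) * ((1 - gam) * b 2)"
    using reach_value_nbr[OF xt] reach_value_entrant[OF Zne t] card_Y by simp
  finally have reach_sum: "(\<Sum>w\<in>N-{x}. reach_value b gam N ?g x w)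
      = b 1 + (real (card Y) - 1) * ((1 - gam) * b 3) + real (card Z) * ((1 - gam) * b 2)" .
  have shares: "(\<Sum>q\<in>node_pairs N. broker_share b gam N ?g x q) = 0"
    by (intro sum.neutral ballI broker_share_entrant_zero[OF Yne Zne t])
  show ?thesis
    unfolding util_decomposition[OF finite_N xN links_within_entrant_net[OF SY]] deg reach_sum shares
    by (simp add: algebra_simps)
qed

lemma degree_entrant_net_empty:
  assumes t: "t \<in> Y"
  shows "degree (entrant_net Y Z x {}) t = card Z"
proof -
  have "{k. nbr (entrant_net Y Z x {}) t k} = Z" using t YZ_disj x_notin_Y x_notin_Z by (auto simp: nbr_entrant_net)
  then show ?thesis unfolding degree_def by simp
qed

lemma util_accept_entrant:
  assumes t: "t \<in> Y" and ch: "c < b 1 - b 3"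
  shows "util b c gam N (entrant_net Y Z x {}) t < util b c gam N (insert {x, t} (entrant_net Y Z x {})) t"
proof -
  have E: "links_within N (entrant_net Y Z x {})" by (rule links_within_entrant_net) simp
  have tN: "t \<in> N" and xN: "x \<in> N" using t N_def by auto
  have tx: "t \<noteq> x" using t x_notin_Y by blast
  have nx: "\<not> nbr (entrant_net Y Z x {}) m x" for m using x_notin_Y x_notin_Z by (simp add: nbr_entrant_net)
  have ng: "{t, x} \<notin> entrant_net Y Z x {}" using notin_of_nbr[OF tx nx] .
  have "util b c gam N (entrant_net Y Z x {}) t < util b c gam N (insert {t, x} (entrant_net Y Z x {})) t"
    by (rule util_insert_far_gt[OF finite_N E tN xN tx ng _ ch]) (use nx in blast)
  then show ?thesis by (simp add: insert_commute)
qed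

lemma entry_util_entrant_net:
  assumes N: "N = {0..<Suc x}" and Zne: "Z \<noteq> {}" and t: "t \<in> Y"
  shows "entry_util b c gam c0 x (entrant_net Y Z x {}) t
     = - c0 * real (card Z) + (b 1 - c + (1 - gam) * (real (card Z) * b 2 + (real (card Y) - 1) * b 3))"
proof -
  have "Y \<noteq> {}" using t by auto
  show ?thesis
    unfolding entry_util_def N[symmetric] entrant_net_insert[of t "{}", symmetric] degree_entrant_net_empty[OF t]
      util_entrant[OF \<open>Y \<noteq> {}\<close> Zne t] by simp
qed

end

lemma entrant_setting_split:
  assumes P: "benefit_params b gam" and Y: "Y \<subseteq> {0..<n}"
  shows "entrant_setting b gam Y ({0..<n} - Y) n {0..<Suc n}"
proof -
  have "entrant_setting_axioms Y ({0..<n} - Y) n {0..<Suc n}"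
  proof
    show "Y \<inter> ({0..<n} - Y) = {}" by blast
    show "n \<notin> Y" using Y by auto
    show "n \<notin> {0..<n} - Y" by simp
    show "{0..<Suc n} = insert n (Y \<union> ({0..<n} - Y))" using Y by auto
    show "finite {0..<Suc n}" by simp
    show "\<forall>a\<in>Y \<union> ({0..<n} - Y). a < n" using Y by auto
  qed
  then show ?thesis using P by (simp add: entrant_setting_def)
qed

lemma turan_entrant_net:
  assumes A: "A \<subseteq> {0..<n}"
  shows "{{x, y} | x y. x \<in> A \<and> y \<in> {0..<n} - A} = entrant_net A ({0..<n} - A) n {}"
    and "{{x, y} | x y. x \<in> A \<and> y \<in> {0..<n} - A} = entrant_net ({0..<n} - A) ({0..<n} - ({0..<n} - A)) n {}"
proof -
  show "{{x, y} | x y. x \<in> A \<and> y \<in> {0..<n} - A} = entrant_net A ({0..<n} - A) n {}"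
    unfolding entrant_net_def by simp
  have e: "{0..<n} - ({0..<n} - A) = A" using A by auto
  show "{{x, y} | x y. x \<in> A \<and> y \<in> {0..<n} - A} = entrant_net ({0..<n} - A) ({0..<n} - ({0..<n} - A)) n {}"
    unfolding entrant_net_def e by (auto simp: insert_commute)
qed

lemma entrant_net_full:
  assumes Y: "Y \<subseteq> {0..<n}"
  shows "entrant_net Y ({0..<n} - Y) n Y = {{x, y} | x y. x \<in> Y \<and> y \<in> {0..<Suc n} - Y}"
proof -
  have "{0..<Suc n} - Y = insert n ({0..<n} - Y)" using Y by auto
  then show ?thesis unfolding entrant_net_def by (auto simp: insert_commute)
qed

lemma half_cases:
  fixes n :: nat
  shows "even n \<Longrightarrow> n - n div 2 = n div 2 \<and> Suc n div 2 = n div 2"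
    and "odd n \<Longrightarrow> n - n div 2 = Suc (n div 2) \<and> Suc n div 2 = Suc (n div 2)"
  by (auto elim!: evenE oddE)

context benefit_params
begin

lemma entry_anchor_in_larger_part:
  assumes c0l: "(1 - gam) * (b 2 - b 3) < c0" and ch: "c < b 1 - b 3" and n: "odd n"
    and A: "A \<subseteq> {0..<n}" "card A = n div 2"
    and g: "g = {{x, y} | x y. x \<in> A \<and> y \<in> {0..<n} - A}"
    and ec: "entry_choice b c gam c0 n g t"
  shows "t \<notin> A"
proof
  assume tA: "t \<in> A"
  let ?B = "{0..<n} - A"
  have cB: "card ?B = Suc (card A)" using A n by (simp add: card_Diff_subset finite_subset) presburger
  then obtain t' where t': "t' \<in> ?B" by (metis card.empty card_eq_0_iff nat.distinct(1) ex_in_conv)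
  interpret FA: entrant_setting b gam A ?B n "{0..<Suc n}" by (rule entrant_setting_split[OF benefit_params_axioms A(1)])
  have eB: "{0..<n} - ?B = A" using A(1) by auto
  interpret FB: entrant_setting b gam ?B A n "{0..<Suc n}"
    using entrant_setting_split[OF benefit_params_axioms, of ?B n] unfolding eB by blast
  have gA: "g = entrant_net A ?B n {}" using turan_entrant_net(1)[OF A(1)] g by simp
  have gB: "g = entrant_net ?B A n {}" using turan_entrant_net(2)[OF A(1)] g unfolding eB by simp
  have "accepts b c gam n g t'"
    unfolding accepts_def using FB.util_accept_entrant[OF t' ch] gB by simp
  then have "entry_util b c gam c0 n g t' \<le> entry_util b c gam c0 n g t"
    using ec t' unfolding entry_choice_def by auto
  moreover have "entry_util b c gam c0 n g t = - c0 * real (card ?B)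
      + (b 1 - c + (1 - gam) * (real (card ?B) * b 2 + (real (card A) - 1) * b 3))"
    unfolding gA by (rule FA.entry_util_entrant_net[OF refl _ tA]) (use t' in auto)
  moreover have "entry_util b c gam c0 n g t' = - c0 * real (card A)
      + (b 1 - c + (1 - gam) * (real (card A) * b 2 + (real (card ?B) - 1) * b 3))"
    unfolding gB by (rule FB.entry_util_entrant_net[OF refl _ t']) (use tA in auto)
  ultimately have "c0 \<le> (1 - gam) * (b 2 - b 3)" unfolding cB by (simp add: algebra_simps)
  then show False using c0l by simp
qed

lemma bipartite_turan_step:
  assumes cl: "b 1 - b 2 + gam * (3 * b 2 - b 3) < c" and ch: "c < b 1 - b 3"
    and c0l: "(1 - gam) * (b 2 - b 3) < c0"
    and bt: "bipartite_turan n g"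
    and ec: "entry_choice b c gam c0 n g t"
    and mv: "(move b c gam {0..<Suc n})\<^sup>*\<^sup>* (insert {n, t} g) g'"
    and ps: "pairwise_stable b c gam {0..<Suc n} g'"
  shows "bipartite_turan (Suc n) g'"
proof -
  obtain A where A: "A \<subseteq> {0..<n}" "card A = n div 2" and g: "g = {{x, y} | x y. x \<in> A \<and> y \<in> {0..<n} - A}"
    using bt unfolding bipartite_turan_def by blast
  let ?B = "{0..<n} - A"
  let ?N = "{0..<Suc n}"
  have cB: "card ?B = n - n div 2" using A by (simp add: card_Diff_subset finite_subset)
  have tn: "t < n" using ec unfolding entry_choice_def by auto
  define Y where "Y = (if t \<in> A then A else ?B)"
  let ?Z = "{0..<n} - Y"
  have tY: "t \<in> Y" unfolding Y_def using tn by auto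
  have Ysub: "Y \<subseteq> {0..<n}" unfolding Y_def using A(1) by auto
  interpret F: entrant_setting b gam Y ?Z n ?N by (rule entrant_setting_split[OF benefit_params_axioms Ysub])
  have gY: "g = entrant_net Y ?Z n {}"
    using turan_entrant_net[OF A(1)] g unfolding Y_def by (cases "t \<in> A") simp_all
  have "card Y \<le> n" using card_mono[OF _ Ysub] by simp
  then have cYZ: "card Y + card ?Z = n" using Ysub by (simp add: card_Diff_subset finite_subset)
  have cY: "card Y = Suc n div 2 \<and> card ?Z + 1 \<ge> card Y \<and> card Y \<ge> card ?Z"
  proof (cases "even n")
    case True
    then have "card Y = n div 2" unfolding Y_def using A(2) cB half_cases(1)[OF True] by simp
    then show ?thesis using cYZ half_cases(1)[OF True] by arith
  next
    case False
    then have "Y = ?B" using entry_anchor_in_larger_part[OF c0l ch False A g ec] unfolding Y_def by simp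
    then have "card Y = Suc (n div 2)" using cB half_cases(2)[OF False] by simp
    then show ?thesis using cYZ half_cases(2)[OF False] by arith
  qed
  have "1 \<le> card Y" using tY F.finite_Y card_gt_0_iff by (metis One_nat_def Suc_leI empty_iff)
  then have sc: F.balanced_sides unfolding F.balanced_sides_def using cY by linarith
  have "(move b c gam ?N)\<^sup>*\<^sup>* (entrant_net Y ?Z n {t}) g'"
    using mv unfolding gY F.entrant_net_insert[of t "{}", symmetric] .
  then obtain S where S: "{t} \<subseteq> S" "S \<subseteq> Y" "g' = entrant_net Y ?Z n S"
    using F.moves_entrant_net[OF cl ch sc] tY by blast
  have "S = Y" using F.pairwise_stable_entrant_net[OF ch S(2)] S(1) ps S(3) by blast
  then have "g' = {{x, y} | x y. x \<in> Y \<and> y \<in> ?N - Y}" using S(3) entrant_net_full[OF Ysub] by simp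
  moreover have "Y \<subseteq> ?N" using Ysub by auto
  ultimately show ?thesis unfolding bipartite_turan_def using cY by blast
qed

end

theorem theorem3:
  fixes b :: "nat \<Rightarrow> real" and c gam c0 :: real
  assumes b_pos: "\<forall>i \<ge> 1. 0 < b i"
    and b_dec: "\<forall>i \<ge> 1. b (Suc i) < b i"
    and gam_nonneg: "0 \<le> gam" and gam_lt1: "gam < 1"
    and gam_small: "gam < (b 2 - b 3) / (3 * b 2 - b 3)"
    and c_low: "b 1 - b 2 + gam * (3 * b 2 - b 3) < c"
    and c_high: "c < b 1 - b 3"
    and c0_low: "(1 - gam) * (b 2 - b 3) < c0"
    and c0_high: "c0 \<le> (1 - gam) * b 2"
  shows "\<forall>n \<ge> 1. \<forall>g. reached b c gam c0 n g \<longrightarrow> bipartite_turan n g"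
proof -
  interpret benefit_params b gam by unfold_locales (use b_pos b_dec gam_nonneg gam_lt1 in auto)
  have "bipartite_turan n g" if "reached b c gam c0 n g" for n g
    using that
  proof (induction rule: reached.induct)
    case start
    show ?case unfolding bipartite_turan_def by (intro exI[of _ "{}"]) auto
  next
    case (enter n g t g')
    then show ?case by (intro bipartite_turan_step[OF c_low c_high c0_low])
  qed
  then show ?thesis by blast
qed

end
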